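(* Fix a finite alphabet $\mathcal{X}$, integers $M_1\ge M_2\ge1$, reals $\alpha,\beta>0$, and reals $\lambda_1,\lambda_2,\lambda_3>0$ with $\lambda_2\le\min\{\lambda_1,\lambda_3\}$; let $\xi_n=\lceil\alpha n\rceil$, $\chi_n=\lceil\beta n\rceil$. For each integer $N\ge2$ let $\Phi_N=(\tau,\phi_\tau)$ be the sequential test defined as follows. For $n\in\mathbb{N}$ and $(h,t)\in\mathcal{M}$ define the events $\mathcal{A}^n=\{\forall (h,t)\in\mathcal{M}:\ \mathrm{S}_t^h(\mathbf{X}^{\xi_n},\mathbf{Y}^{\chi_n})>\lambda_1\}$, $\mathcal{B}_{1,h,t}^n=\{\mathrm{S}_t^h(\mathbf{X}^{\xi_n},\mathbf{Y}^{\chi_n})\le\lambda_2\}$, $\mathcal{B}_{2,h,t}^n=\{\min_{\bar t\in[T_h],\bar t\ne t}\mathrm{S}_{\bar t}^h(\mathbf{X}^{\xi_n},\mathbf{Y}^{\chi_n})>\lambda_3\}$, $\mathcal{B}_{h,t}^n=\mathcal{B}_{1,h,t}^n\cap\mathcal{B}_{2,h,t}^n$, $\mathcal{B}^n=\bigcup_{(K,l)\in\mathcal{M}}\big(\mathcal{B}_{K,l}^n\cap\bigcap_{(h,t)\in\mathcal{M},(h,t)\ne(K,l)}(\mathcal{B}_{h,t}^n)^{c}\big)$. Let $\tau=\inf\{n\ge N-1:\ \mathcal{A}^n\cup\mathcal{B}^n\text{ occurs}\}$, and at time $\tau$ decide $\mathrm{H}_l^K$ if $\mathcal{B}_{K,l}^\tau\cap\bigcap_{(h,t)\ne(K,l)}(\mathcal{B}_{h,t}^\tau)^c$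 occurs for $(K,l)\in\mathcal{M}$, and decide $\mathrm{H}_{\mathrm{r}}$ otherwise. Then: (i) For any $(P^{M_1},Q^{M_2})\in\mathcal{P}_0$, if $\lambda_1<\mathrm{G}_0(P^{M_1},Q^{M_2},\alpha,\beta)$ then $\mathbb{E}_{\mathrm{r}}[\tau]\le N$ for all sufficiently large $N$, and $$\liminf_{N\to\infty}\frac{-\log\eta(\Phi_N|P^{M_1},Q^{M_2})}{N}\ge E_{\mathrm{r}}(\lambda_1,P^{M_1},Q^{M_2}).$$ (ii) For any $(K,l)\in\mathcal{M}$ and any $(P^{M_1},Q^{M_2})\in\mathcal{P}_l^K$: if $\lambda_2>0$ and $\lambda_3<\Lambda_l^K(P^{M_1},Q^{M_2},\alpha,\beta)$ then $\mathbb{E}_l^K[\tau]\le N$ for all sufficiently large $N$; moreover $$\liminf_{N\to\infty}\frac{-\log\bar\beta(\Phi_N|P^{M_1},Q^{M_2})}{N}\ge\min\{G(\lambda_2,P^{M_1},Q^{M_2}),\lambda_3\},\qquad \liminf_{N\to\infty}\frac{-\log\zeta(\Phi_N|P^{M_1},Q^{M_2})}{N}\ge\lambda_1.$$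
   Context: Model: $\mathcal{P}(\mathcal{X})$ is the set of distributions on $\mathcal{X}$. For $i\in[M_1]$, $X_{i,1},X_{i,2},\dots$ i.i.d. $P_i$; for $j\in[M_2]$, $Y_{j,1},Y_{j,2},\dots$ i.i.d. $Q_j$; all independent; within each database distributions are distinct. At time $n$ one observes $X_i^{\xi_n}=(X_{i,1},\dots,X_{i,\xi_n})$, $Y_j^{\chi_n}=(Y_{j,1},\dots,Y_{j,\chi_n})$ for all $i,j$. For $K\in[M_2]$, a $K$-match is a set of $K$ pairs in $[M_1]\times[M_2]$ with no two sharing a first or second coordinate; there are $T_K=\binom{M_1}{K}\binom{M_2}{K}K!$, enumerated $\mathcal{M}_1^K,\dots,\mathcal{M}_{T_K}^K$. $\mathcal{M}:=\{(h,t):h\in[M_2],t\in[T_h]\}$. Hypotheses: $\mathrm{H}_l^K$ ($(K,l)\in\mathcal{M}$) means $(P^{M_1},Q^{M_2})\in\mathcal{P}_l^K:=\{(\tilde P^{M_1},\tilde Q^{M_2}):\tilde P_i=\tilde Q_j\text{ iff }(i,j)\in\mathcal{M}_l^K\}$, with probability $\mathbb{P}_l^K$, expectation $\mathbb{E}_l^K$; the null hypothesis $\mathrm{H}_{\mathrm{r}}$ means $(P^{M_1},Q^{M_2})\in\mathcal{P}_0:=\{\tilde P_i\ne\tilde Q_j\ \forall (i,j)\in[M_1]\times[M_2]\}$, with $\mathbb{P}_{\mathrm{r}},\mathbb{E}_{\mathrm{r}}$. Error probabilities: under $\mathrm{H}_l^K$, mismatch $\bar\beta(\Phi|P^{M_1},Q^{M_2})=\mathbb{P}_l^K\{\phi_\tau\notin\{\mathrm{H}_l^K,\mathrm{H}_{\mathrm{r}}\}\}$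 and false reject $\zeta(\Phi|P^{M_1},Q^{M_2})=\mathbb{P}_l^K\{\phi_\tau=\mathrm{H}_{\mathrm{r}}\}$; under $\mathrm{H}_{\mathrm{r}}$, false alarm $\eta(\Phi|P^{M_1},Q^{M_2})=\mathbb{P}_{\mathrm{r}}\{\phi_\tau\ne\mathrm{H}_{\mathrm{r}}\}$. Notation: $\hat T_{x^n}$ is the type (empirical distribution) of $x^n$; $D$ is KL divergence; $R_{\alpha,\beta}^{P,Q}=\frac{\alpha P+\beta Q}{\alpha+\beta}$; $\mathrm{GJS}(P,Q,\alpha,\beta)=\alpha D(P\|R_{\alpha,\beta}^{P,Q})+\beta D(Q\|R_{\alpha,\beta}^{P,Q})$; $\mathrm{G}_t^h(P^{M_1},Q^{M_2},\alpha,\beta)=\sum_{(i,j)\in\mathcal{M}_t^h}\mathrm{GJS}(P_i,Q_j,\alpha,\beta)$; $\mathrm{S}_t^h(\mathbf{x}^{\xi_n},\mathbf{y}^{\chi_n})=\mathrm{G}_t^h((\hat T_{x_i^{\xi_n}})_i,(\hat T_{y_j^{\chi_n}})_j,\alpha,\beta)$. $E(P^{M_1},Q^{M_2},\Omega^{M_1},\Psi^{M_2},\alpha,\beta)=\sum_{i}\alpha D(\Omega_i\|P_i)+\sum_j\beta D(\Psi_j\|Q_j)$. $\mathrm{G}_0(P^{M_1},Q^{M_2},\alpha,\beta)=\min_{(i,j)\in[M_1]\times[M_2]}\mathrm{GJS}(P_i,Q_j,\alpha,\beta)$. $E_{\mathrm{r}}(\lambda,P^{M_1},Q^{M_2})=\min_{(h,t)\in\mathcal{M}}\min_{(\Omega^{M_1},\Psi^{M_2})\in\mathcal{P}(\mathcal{X})^{M_1+M_2}:\mathrm{G}_t^h(\Omega^{M_1},\Psi^{M_2},\alpha,\beta)\le\lambda}E(P^{M_1},Q^{M_2},\Omega^{M_1},\Psi^{M_2},\alpha,\beta)$.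 For $(P^{M_1},Q^{M_2})\in\mathcal{P}_l^K$: $\Lambda_l^K(P^{M_1},Q^{M_2},\alpha,\beta)=\min_{t\in[T_K],t\ne l}\sum_{(i,j)\in\mathcal{M}_t^K\setminus\mathcal{M}_l^K}\mathrm{GJS}(P_i,Q_j,\alpha,\beta)$ and $G(\lambda,P^{M_1},Q^{M_2})=\min_{(h,t)\in\mathcal{M}:h>K}\min_{(\Omega^{M_1},\Psi^{M_2}):\mathrm{G}_t^h(\Omega^{M_1},\Psi^{M_2},\alpha,\beta)\le\lambda}E(P^{M_1},Q^{M_2},\Omega^{M_1},\Psi^{M_2},\alpha,\beta)$ (a minimum over an empty set is $+\infty$). *)

theory Defs
  imports "HOL-Probability.Probability"
begin

definition probvec :: "('a::finite \<Rightarrow> real) set" where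
  "probvec = {p. (\<forall>a. 0 \<le> p a) \<and> sum p UNIV = 1}"

definition klr :: "('a::finite \<Rightarrow> real) \<Rightarrow> ('a \<Rightarrow> real) \<Rightarrow> real" where
  "klr p q = (\<Sum>a\<in>UNIV. if p a = 0 then 0 else p a * ln (p a / q a))"

definition kl :: "('a::finite \<Rightarrow> real) \<Rightarrow> ('a \<Rightarrow> real) \<Rightarrow> ereal" where
  "kl p q = (if (\<forall>a. q a = 0 \<longrightarrow> p a = 0) then ereal (klr p q) else \<infinity>)"

definition mixR :: "real \<Rightarrow> real \<Rightarrow> ('a \<Rightarrow> real) \<Rightarrow> ('a \<Rightarrow> real) \<Rightarrow> 'a \<Rightarrow> real" where
  "mixR \<alpha> \<beta> p q = (\<lambda>a. (\<alpha> * p a + \<beta> * q a) / (\<alpha> + \<beta>))"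

definition GJS :: "('a::finite \<Rightarrow> real) \<Rightarrow> ('a \<Rightarrow> real) \<Rightarrow> real \<Rightarrow> real \<Rightarrow> real" where
  "GJS p q \<alpha> \<beta> = \<alpha> * klr p (mixR \<alpha> \<beta> p q) + \<beta> * klr q (mixR \<alpha> \<beta> p q)"

text \<open>A match: a set of pairs in [M1] x [M2] (0-based) no two sharing a coordinate. The index set \<M> is represented by the
  matches themselves (h = card of the match, t = the match).\<close>
definition is_match :: "nat \<Rightarrow> nat \<Rightarrow> (nat \<times> nat) set \<Rightarrow> bool" where
  "is_match M1 M2 m \<longleftrightarrow> m \<subseteq> {..<M1} \<times> {..<M2} \<and>
     (\<forall>(i,j)\<in>m. \<forall>(i',j')\<in>m. (i = i' \<longleftrightarrow> j = j'))"

definition matches :: "nat \<Rightarrow> nat \<Rightarrow> nat \<Rightarrow> (nat \<times> nat) set set" where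
  "matches M1 M2 K = {m. is_match M1 M2 m \<and> card m = K}"

definition Midx :: "nat \<Rightarrow> nat \<Rightarrow> (nat \<times> nat) set set" where
  "Midx M1 M2 = {m. is_match M1 M2 m \<and> 1 \<le> card m \<and> card m \<le> M2}"

definition Gm :: "(nat \<times> nat) set \<Rightarrow> real \<Rightarrow> real \<Rightarrow> (nat \<Rightarrow> 'a::finite \<Rightarrow> real)
     \<Rightarrow> (nat \<Rightarrow> 'a \<Rightarrow> real) \<Rightarrow> real" where
  "Gm m \<alpha> \<beta> P Q = (\<Sum>(i,j)\<in>m. GJS (P i) (Q j) \<alpha> \<beta>)"

text \<open>Sample point: \<omega> (Inl i, k) = X_{i,k+1}, \<omega> (Inr j, k) = Y_{j,k+1}.\<close>
type_synonym 'a sample = "(nat + nat) \<times> nat \<Rightarrow> 'a"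

definition obs_space :: "(nat \<Rightarrow> 'a pmf) \<Rightarrow> (nat \<Rightarrow> 'a pmf) \<Rightarrow> 'a sample measure" where
  "obs_space P Q = PiM UNIV (\<lambda>(s,k). measure_pmf (case s of Inl i \<Rightarrow> P i | Inr j \<Rightarrow> Q j))"

definition emp :: "(nat \<Rightarrow> 'a::finite) \<Rightarrow> nat \<Rightarrow> 'a \<Rightarrow> real" where
  "emp x n = (\<lambda>a. real (card {k. k < n \<and> x k = a}) / real n)"

definition ssize :: "real \<Rightarrow> nat \<Rightarrow> nat" where
  "ssize \<alpha> n = nat \<lceil>\<alpha> * real n\<rceil>"

definition Sstat :: "real \<Rightarrow> real \<Rightarrow> (nat \<times> nat) set \<Rightarrow> nat \<Rightarrow> 'a::finite sample \<Rightarrow> real" where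
  "Sstat \<alpha> \<beta> m n \<omega> = Gm m \<alpha> \<beta> (\<lambda>i. emp (\<lambda>k. \<omega> (Inl i, k)) (ssize \<alpha> n))
                                 (\<lambda>j. emp (\<lambda>k. \<omega> (Inr j, k)) (ssize \<beta> n))"

definition evA :: "nat \<Rightarrow> nat \<Rightarrow> real \<Rightarrow> real \<Rightarrow> real \<Rightarrow> nat \<Rightarrow> 'a::finite sample \<Rightarrow> bool" where
  "evA M1 M2 \<alpha> \<beta> l1 n \<omega> = (\<forall>m\<in>Midx M1 M2. l1 < Sstat \<alpha> \<beta> m n \<omega>)"

definition evB :: "nat \<Rightarrow> nat \<Rightarrow> real \<Rightarrow> real \<Rightarrow> real \<Rightarrow> real \<Rightarrow> (nat \<times> nat) set \<Rightarrow> nat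
     \<Rightarrow> 'a::finite sample \<Rightarrow> bool" where
  "evB M1 M2 \<alpha> \<beta> l2 l3 m n \<omega> =
     (Sstat \<alpha> \<beta> m n \<omega> \<le> l2 \<and>
      (\<forall>m'\<in>matches M1 M2 (card m). m' \<noteq> m \<longrightarrow> l3 < Sstat \<alpha> \<beta> m' n \<omega>))"

text \<open>The event B_{K,l} \<inter> \<Inter>_{(h,t) \<noteq> (K,l)} (B_{h,t})^c.\<close>
definition evD :: "nat \<Rightarrow> nat \<Rightarrow> real \<Rightarrow> real \<Rightarrow> real \<Rightarrow> real \<Rightarrow> (nat \<times> nat) set \<Rightarrow> nat
     \<Rightarrow> 'a::finite sample \<Rightarrow> bool" where
  "evD M1 M2 \<alpha> \<beta> l2 l3 m n \<omega> =
     (evB M1 M2 \<alpha> \<beta> l2 l3 m n \<omega> \<and>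
      (\<forall>m'\<in>Midx M1 M2. m' \<noteq> m \<longrightarrow> \<not> evB M1 M2 \<alpha> \<beta> l2 l3 m' n \<omega>))"

definition stops :: "nat \<Rightarrow> nat \<Rightarrow> real \<Rightarrow> real \<Rightarrow> real \<Rightarrow> real \<Rightarrow> real \<Rightarrow> nat
     \<Rightarrow> 'a::finite sample \<Rightarrow> bool" where
  "stops M1 M2 \<alpha> \<beta> l1 l2 l3 n \<omega> =
     (evA M1 M2 \<alpha> \<beta> l1 n \<omega> \<or> (\<exists>m\<in>Midx M1 M2. evD M1 M2 \<alpha> \<beta> l2 l3 m n \<omega>))"

definition tau :: "nat \<Rightarrow> nat \<Rightarrow> real \<Rightarrow> real \<Rightarrow> real \<Rightarrow> real \<Rightarrow> real \<Rightarrow> nat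
     \<Rightarrow> 'a::finite sample \<Rightarrow> enat" where
  "tau M1 M2 \<alpha> \<beta> l1 l2 l3 N \<omega> =
     (if \<exists>n. N - 1 \<le> n \<and> stops M1 M2 \<alpha> \<beta> l1 l2 l3 n \<omega>
      then enat (LEAST n. N - 1 \<le> n \<and> stops M1 M2 \<alpha> \<beta> l1 l2 l3 n \<omega>)
      else \<infinity>)"

text \<open>Decision of \<Phi>_N: Some m = decide H_m, None = decide H_r (also used, irrelevantly,
  when tau is infinite; all error events below require tau finite).\<close>
definition decision :: "nat \<Rightarrow> nat \<Rightarrow> real \<Rightarrow> real \<Rightarrow> real \<Rightarrow> real \<Rightarrow> real \<Rightarrow> nat
     \<Rightarrow> 'a::finite sample \<Rightarrow> (nat \<times> nat) set option" where
  "decision M1 M2 \<alpha> \<beta> l1 l2 l3 N \<omega> =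
     (case tau M1 M2 \<alpha> \<beta> l1 l2 l3 N \<omega> of
        enat n \<Rightarrow> (if \<exists>m\<in>Midx M1 M2. evD M1 M2 \<alpha> \<beta> l2 l3 m n \<omega>
                   then Some (THE m. m \<in> Midx M1 M2 \<and> evD M1 M2 \<alpha> \<beta> l2 l3 m n \<omega>)
                   else None)
      | \<infinity> \<Rightarrow> None)"

definition distinct_db :: "nat \<Rightarrow> nat \<Rightarrow> (nat \<Rightarrow> 'a pmf) \<Rightarrow> (nat \<Rightarrow> 'a pmf) \<Rightarrow> bool" where
  "distinct_db M1 M2 P Q \<longleftrightarrow> inj_on P {..<M1} \<and> inj_on Q {..<M2}"

definition inP0 :: "nat \<Rightarrow> nat \<Rightarrow> (nat \<Rightarrow> 'a pmf) \<Rightarrow> (nat \<Rightarrow> 'a pmf) \<Rightarrow> bool" where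
  "inP0 M1 M2 P Q \<longleftrightarrow> distinct_db M1 M2 P Q \<and> (\<forall>i<M1. \<forall>j<M2. P i \<noteq> Q j)"

definition inPm :: "nat \<Rightarrow> nat \<Rightarrow> (nat \<times> nat) set \<Rightarrow> (nat \<Rightarrow> 'a pmf) \<Rightarrow> (nat \<Rightarrow> 'a pmf) \<Rightarrow> bool" where
  "inPm M1 M2 m P Q \<longleftrightarrow> distinct_db M1 M2 P Q \<and> (\<forall>i<M1. \<forall>j<M2. (P i = Q j \<longleftrightarrow> (i,j) \<in> m))"

definition Eexp :: "nat \<Rightarrow> nat \<Rightarrow> real \<Rightarrow> real \<Rightarrow> (nat \<Rightarrow> 'a::finite pmf) \<Rightarrow> (nat \<Rightarrow> 'a pmf)
     \<Rightarrow> (nat \<Rightarrow> 'a \<Rightarrow> real) \<Rightarrow> (nat \<Rightarrow> 'a \<Rightarrow> real) \<Rightarrow> ereal" where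
  "Eexp M1 M2 \<alpha> \<beta> P Q \<Omega> \<Psi> =
     (\<Sum>i<M1. ereal \<alpha> * kl (\<Omega> i) (pmf (P i))) + (\<Sum>j<M2. ereal \<beta> * kl (\<Psi> j) (pmf (Q j)))"

definition feasible :: "nat \<Rightarrow> nat \<Rightarrow> real \<Rightarrow> real \<Rightarrow> real \<Rightarrow> (nat \<times> nat) set
     \<Rightarrow> (nat \<Rightarrow> 'a::finite \<Rightarrow> real) \<Rightarrow> (nat \<Rightarrow> 'a \<Rightarrow> real) \<Rightarrow> bool" where
  "feasible M1 M2 \<alpha> \<beta> lam m \<Omega> \<Psi> \<longleftrightarrow>
     (\<forall>i<M1. \<Omega> i \<in> probvec) \<and> (\<forall>j<M2. \<Psi> j \<in> probvec) \<and> Gm m \<alpha> \<beta> \<Omega> \<Psi> \<le> lam"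

text \<open>E_r(\<lambda>, P, Q) (minimum over an empty set = +\<infinity>).\<close>
definition Er :: "nat \<Rightarrow> nat \<Rightarrow> real \<Rightarrow> real \<Rightarrow> real \<Rightarrow> (nat \<Rightarrow> 'a::finite pmf) \<Rightarrow> (nat \<Rightarrow> 'a pmf) \<Rightarrow> ereal" where
  "Er M1 M2 \<alpha> \<beta> lam P Q = Inf {Eexp M1 M2 \<alpha> \<beta> P Q \<Omega> \<Psi> | \<Omega> \<Psi> m.
       m \<in> Midx M1 M2 \<and> feasible M1 M2 \<alpha> \<beta> lam m \<Omega> \<Psi>}"

definition Gexp :: "nat \<Rightarrow> nat \<Rightarrow> real \<Rightarrow> real \<Rightarrow> nat \<Rightarrow> real \<Rightarrow> (nat \<Rightarrow> 'a::finite pmf) \<Rightarrow> (nat \<Rightarrow> 'a pmf) \<Rightarrow> ereal" where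
  "Gexp M1 M2 \<alpha> \<beta> K lam P Q = Inf {Eexp M1 M2 \<alpha> \<beta> P Q \<Omega> \<Psi> | \<Omega> \<Psi> m.
       m \<in> Midx M1 M2 \<and> K < card m \<and> feasible M1 M2 \<alpha> \<beta> lam m \<Omega> \<Psi>}"

definition Lam :: "nat \<Rightarrow> nat \<Rightarrow> real \<Rightarrow> real \<Rightarrow> (nat \<times> nat) set \<Rightarrow> (nat \<Rightarrow> 'a::finite pmf) \<Rightarrow> (nat \<Rightarrow> 'a pmf) \<Rightarrow> ereal" where
  "Lam M1 M2 \<alpha> \<beta> m P Q = Inf {ereal (\<Sum>(i,j)\<in>m' - m. GJS (pmf (P i)) (pmf (Q j)) \<alpha> \<beta>) | m'.
       m' \<in> matches M1 M2 (card m) \<and> m' \<noteq> m}"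

definition G0 :: "nat \<Rightarrow> nat \<Rightarrow> real \<Rightarrow> real \<Rightarrow> (nat \<Rightarrow> 'a::finite pmf) \<Rightarrow> (nat \<Rightarrow> 'a pmf) \<Rightarrow> real" where
  "G0 M1 M2 \<alpha> \<beta> P Q = Min {GJS (pmf (P i)) (pmf (Q j)) \<alpha> \<beta> | i j. i < M1 \<and> j < M2}"

definition neglog :: "real \<Rightarrow> ereal" where
  "neglog p = (if p = 0 then \<infinity> else ereal (- ln p))"

end

(*
  At time n the test only looks at the type profile of the first \<lceil>\<alpha>n\<rceil> and \<lceil>\<beta>n\<rceil> samples
  of every sequence.  Each of the bad events (an error, or not stopping at time n) forces this
  profile into a region whose divergence E from the true distributions is at least some c, and by
  the method of types such a region has probability at most poly(n) exp(-nc).  Summing over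
  n \<ge> N - 1 gives exp(-N c') for every c' < c: this yields the error exponents, and for c > 0 it
  yields E[\<tau>] \<le> N - 1 + \<Sum>n\<ge>N-1. P(no stop at n) \<le> N.
  The exponents come from GJS(\<Omega>, \<Psi>) \<le> \<alpha> D(\<Omega> \<parallel> P) + \<beta> D(\<Psi> \<parallel> P) on pairs of the true match; the
  positivity of c needed for the stopping time comes from the continuity of GJS together with the
  Hellinger lower bound on D.
*)

theory Submission
  imports Defs "HOL-Real_Asymp.Real_Asymp"
begin

definition by_db :: "(nat \<Rightarrow> 'b) \<Rightarrow> (nat \<Rightarrow> 'b) \<Rightarrow> (nat + nat) \<times> nat \<Rightarrow> 'b" where
  "by_db X Y = (\<lambda>(s, k). case_sum X Y s)"

lemma by_db_simps [simp]: "by_db X Y (Inl i, k) = X i" "by_db X Y (Inr j, k) = Y j"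
  by (simp_all add: by_db_def)

lemma obs_space_eq_PiM: "obs_space P Q = PiM UNIV (\<lambda>k. measure_pmf (by_db P Q k))"
  unfolding obs_space_def by_db_def by (intro arg_cong[where f = "PiM UNIV"] ext) (auto split: sum.split)

lemma space_obs_space [simp]: "space (obs_space P Q) = UNIV"
  unfolding obs_space_eq_PiM space_PiM by auto

lemma prob_space_obs_space: "prob_space (obs_space P Q)"
  unfolding obs_space_eq_PiM by (rule prob_space_PiM) (simp add: prob_space_measure_pmf)

definition cylinder :: "'i set \<Rightarrow> ('i \<Rightarrow> 'a) \<Rightarrow> ('i \<Rightarrow> 'a) set" where
  "cylinder J x = {\<omega>. \<forall>k\<in>J. \<omega> k = x k}"

lemma cylinder_eq_prod_emb:
  "cylinder J x = prod_emb UNIV (\<lambda>k. measure_pmf (p k)) J (PiE J (\<lambda>k. {x k}))"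
  unfolding cylinder_def prod_emb_def by (auto simp: space_PiM PiE_iff restrict_def)

lemma sets_cylinder: "finite J \<Longrightarrow> cylinder J x \<in> sets (PiM UNIV (\<lambda>k. measure_pmf (p k)))"
  by (subst cylinder_eq_prod_emb[of _ _ p]) (auto intro!: sets_PiM_I_finite)

lemma emeasure_cylinder:
  "finite J \<Longrightarrow> emeasure (PiM UNIV (\<lambda>k. measure_pmf (p k))) (cylinder J x) = (\<Prod>k\<in>J. ennreal (pmf (p k) (x k)))"
  by (subst cylinder_eq_prod_emb[of _ _ p], subst emeasure_PiM_emb)
    (auto simp: prob_space_measure_pmf emeasure_pmf_single)

lemma sum_PiE_prod_probvec:
  fixes f :: "'i \<Rightarrow> 'a::finite \<Rightarrow> real"
  assumes "finite J" and "\<And>k. k \<in> J \<Longrightarrow> f k \<in> probvec"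
  shows "(\<Sum>x\<in>PiE J (\<lambda>_. UNIV). \<Prod>k\<in>J. f k (x k)) = 1"
proof -
  have "(\<Sum>x\<in>PiE J (\<lambda>_. UNIV). \<Prod>k\<in>J. f k (x k)) = (\<Prod>k\<in>J. \<Sum>a\<in>UNIV. f k a)"
    by (rule prod_sum_PiE[symmetric]) (use assms(1) in auto)
  also have "\<dots> = 1"
    using assms(2) by (intro prod.neutral) (simp add: probvec_def)
  finally show ?thesis .
qed

lemma pmf_probvec: "pmf p \<in> probvec"
  unfolding probvec_def by (auto simp: sum_pmf_eq_1)

lemma probvec_le_1: "p \<in> probvec \<Longrightarrow> p a \<le> 1"
  unfolding probvec_def using member_le_sum[of a UNIV p] by auto

section \<open>Types and the method of types\<close>

lemma emp_cong: "(\<And>k. k < s \<Longrightarrow> f k = g k) \<Longrightarrow> emp f s = emp g s"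
  unfolding emp_def by (intro ext arg_cong[where f = "\<lambda>n. real (card n) / real s"]) auto

lemma emp_nonneg: "0 \<le> emp f s a"
  unfolding emp_def by simp

lemma sum_card_fibers: "(\<Sum>a\<in>UNIV. card {k. k < s \<and> (f k :: 'a::finite) = a}) = s"
proof -
  have "(\<Sum>a\<in>UNIV. card {k. k < s \<and> f k = a}) = (\<Sum>a\<in>UNIV. \<Sum>k\<in>{k \<in> {..<s}. f k = a}. (1::nat))"
    by simp
  also have "\<dots> = (\<Sum>k<s. 1)"
    by (rule sum.group) auto
  finally show ?thesis by simp
qed

lemma emp_probvec: "s \<ge> 1 \<Longrightarrow> emp (f :: nat \<Rightarrow> 'a::finite) s \<in> probvec"
  unfolding probvec_def emp_def
  by (auto simp: sum_divide_distrib[symmetric] of_nat_sum[symmetric] sum_card_fibers simp del: of_nat_sum)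

lemma prod_lessThan_eq_prod_power_card:
  "(\<Prod>k<(s::nat). g (y k)) = (\<Prod>a\<in>(UNIV :: 'a::finite set). g a ^ card {k. k < s \<and> y k = a})"
proof -
  have "(\<Prod>k<s. g (y k)) = (\<Prod>a\<in>(UNIV :: 'a set). \<Prod>k\<in>{k \<in> {..<s}. y k = a}. g (y k))"
    by (rule prod.group[symmetric]) auto
  also have "\<dots> = (\<Prod>a\<in>UNIV. \<Prod>k\<in>{k \<in> {..<s}. y k = a}. g a)"
    by (rule prod.cong) auto
  finally show ?thesis by simp
qed

lemma klr_nonneg:
  fixes p q :: "'a::finite \<Rightarrow> real"
  assumes p: "p \<in> probvec" and q0: "\<And>a. 0 \<le> q a" and q1: "sum q UNIV \<le> 1"
    and ac: "\<And>a. q a = 0 \<Longrightarrow> p a = 0"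
  shows "0 \<le> klr p q"
proof -
  have "p a - q a \<le> (if p a = 0 then 0 else p a * ln (p a / q a))" for a
  proof (cases "p a = 0")
    case False
    then have pa: "p a > 0" and qa: "q a > 0"
      using p ac[of a] q0[of a] by (auto simp: probvec_def order.order_iff_strict)
    have "1 - q a / p a \<le> ln (p a / q a)"
      using ln_le_minus_one[of "q a / p a"] pa qa by (simp add: ln_div)
    then have "p a * (1 - q a / p a) \<le> p a * ln (p a / q a)"
      using pa by (intro mult_left_mono) auto
    moreover have "p a * (1 - q a / p a) = p a - q a"
      using pa by (simp add: field_simps)
    ultimately show ?thesis using False by simp
  qed (use q0 in simp)
  then have "(\<Sum>a\<in>UNIV. p a - q a) \<le> klr p q"
    unfolding klr_def by (rule sum_mono)
  moreover have "(\<Sum>a\<in>UNIV. p a - q a) = 1 - sum q UNIV"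
    using p by (simp add: probvec_def sum_subtractf)
  ultimately show ?thesis using q1 by linarith
qed

lemma kl_nonneg: "\<Omega> \<in> probvec \<Longrightarrow> 0 \<le> kl \<Omega> (pmf P)"
  unfolding kl_def using klr_nonneg[of \<Omega> "pmf P"] by (auto simp: sum_pmf_eq_1)

lemma scaled_kl_nonneg: "\<alpha> > 0 \<Longrightarrow> \<Omega> \<in> probvec \<Longrightarrow> 0 \<le> ereal \<alpha> * kl \<Omega> (pmf P)"
  by (rule ereal_0_le_mult) (auto intro: kl_nonneg)

lemma prod_eq_prod_emp_mult_exp_klr:
  fixes y :: "nat \<Rightarrow> 'a::finite" and p :: "'a \<Rightarrow> real"
  assumes s: "s \<ge> 1" and p0: "\<And>a. 0 \<le> p a" and ac: "\<And>a. p a = 0 \<Longrightarrow> emp y s a = 0"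
  shows "(\<Prod>k<s. p (y k)) = (\<Prod>k<s. emp y s (y k)) * exp (- (real s * klr (emp y s) p))"
proof -
  let ?c = "\<lambda>a. card {k. k < s \<and> y k = a}"
  let ?T = "emp y s"
  let ?d = "\<lambda>a. if ?T a = 0 then 0 else ?T a * ln (?T a / p a)"
  have T: "?T a = real (?c a) / real s" for a unfolding emp_def by simp
  have "p a ^ ?c a = ?T a ^ ?c a * exp (- (real s * ?d a))" for a
  proof (cases "?c a = 0")
    case False
    then have "real (?c a) > 0" by (simp only: of_nat_0_less_iff neq0_conv)
    then have Ta: "?T a > 0" unfolding T using s by simp
    then have pa: "p a > 0" using ac[of a] p0[of a] by fastforce
    have "real s * ?T a = real (?c a)" using T[of a] s by simp
    moreover have "ln (?T a / p a) = - ln (p a / ?T a)" using Ta pa by (simp add: ln_div)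
    ultimately have "real s * (?T a * ln (?T a / p a)) = real (?c a) * - ln (p a / ?T a)"
      by (metis mult.assoc)
    then have "exp (- (real s * ?d a)) = (p a / ?T a) ^ ?c a"
      using Ta pa by (simp add: exp_of_nat_mult)
    then show ?thesis using Ta by (simp add: power_divide)
  next
    case True
    then show ?thesis unfolding T True by simp
  qed
  then have "(\<Prod>a\<in>UNIV. p a ^ ?c a) = (\<Prod>a\<in>UNIV. ?T a ^ ?c a) * (\<Prod>a\<in>UNIV. exp (- (real s * ?d a)))"
    by (simp add: prod.distrib)
  also have "(\<Prod>a\<in>UNIV. exp (- (real s * ?d a))) = exp (- (real s * klr ?T p))"
    by (simp add: klr_def exp_sum sum_distrib_left flip: sum_negf)
  finally show ?thesis
    by (simp only: prod_lessThan_eq_prod_power_card[of p] prod_lessThan_eq_prod_power_card[of ?T])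
qed

lemma prod_eq_0_if_not_abs_cont:
  fixes p :: "'a::finite \<Rightarrow> real"
  assumes "p a = 0" and "emp y s a \<noteq> 0"
  shows "(\<Prod>k<s. p (y k)) = 0"
proof -
  from assms(2) obtain k where "k < s" "y k = a"
    unfolding emp_def by (metis (mono_tags, lifting) Collect_empty_eq card.empty div_0 of_nat_0)
  then show ?thesis using assms(1) by (intro prod_zero) auto
qed

definition window :: "nat \<Rightarrow> nat \<Rightarrow> nat \<Rightarrow> nat \<Rightarrow> ((nat + nat) \<times> nat) set" where
  "window M1 M2 s t =
     (\<lambda>(i, k). (Inl i, k)) ` ({..<M1} \<times> {..<s}) \<union> (\<lambda>(j, k). (Inr j, k)) ` ({..<M2} \<times> {..<t})"

lemma finite_window [simp]: "finite (window M1 M2 s t)"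
  unfolding window_def by auto

lemma Inl_in_window [simp]: "(Inl i, k) \<in> window M1 M2 s t \<longleftrightarrow> i < M1 \<and> k < s"
  and Inr_in_window [simp]: "(Inr j, k) \<in> window M1 M2 s t \<longleftrightarrow> j < M2 \<and> k < t"
  unfolding window_def by auto

lemma prod_window:
  "(\<Prod>k\<in>window M1 M2 s t. g k) = (\<Prod>i<M1. \<Prod>k<s. g (Inl i, k)) * (\<Prod>j<M2. \<Prod>k<t. g (Inr j, k))"
proof -
  have inj: "inj_on (\<lambda>(i, k). (Inl i :: nat + nat, k :: nat)) A" "inj_on (\<lambda>(j, k). (Inr j :: nat + nat, k :: nat)) B"
    for A B by (auto simp: inj_on_def)
  have "(\<Prod>k\<in>window M1 M2 s t. g k) =
      (\<Prod>k\<in>(\<lambda>(i, k). (Inl i, k)) ` ({..<M1} \<times> {..<s}). g k) * (\<Prod>k\<in>(\<lambda>(j, k). (Inr j, k)) ` ({..<M2} \<times> {..<t}). g k)"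
    unfolding window_def by (rule prod.union_disjoint) auto
  also have "\<dots> = (\<Prod>i<M1. \<Prod>k<s. g (Inl i, k)) * (\<Prod>j<M2. \<Prod>k<t. g (Inr j, k))"
    by (subst prod.reindex[OF inj(1)], subst prod.reindex[OF inj(2)])
      (simp add: prod.cartesian_product case_prod_beta comp_def)
  finally show ?thesis .
qed

text \<open>Types are restricted to the databases that exist, so that an event defined by the type
  profile only depends on the samples in the window.\<close>
definition typesX :: "nat \<Rightarrow> nat \<Rightarrow> 'a::finite sample \<Rightarrow> nat \<Rightarrow> 'a \<Rightarrow> real" where
  "typesX M1 s \<omega> = (\<lambda>i\<in>{..<M1}. emp (\<lambda>k. \<omega> (Inl i, k)) s)"

definition typesY :: "nat \<Rightarrow> nat \<Rightarrow> 'a::finite sample \<Rightarrow> nat \<Rightarrow> 'a \<Rightarrow> real" where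
  "typesY M2 t \<omega> = (\<lambda>j\<in>{..<M2}. emp (\<lambda>k. \<omega> (Inr j, k)) t)"

definition type_event :: "nat \<Rightarrow> nat \<Rightarrow> nat \<Rightarrow> nat
    \<Rightarrow> ((nat \<Rightarrow> 'a \<Rightarrow> real) \<Rightarrow> (nat \<Rightarrow> 'a \<Rightarrow> real) \<Rightarrow> bool) \<Rightarrow> 'a::finite sample set" where
  "type_event M1 M2 s t \<Phi> = {\<omega>. \<Phi> (typesX M1 s \<omega>) (typesY M2 t \<omega>)}"

lemma typesX_probvec: "s \<ge> 1 \<Longrightarrow> i < M1 \<Longrightarrow> typesX M1 s \<omega> i \<in> probvec"
  unfolding typesX_def by (simp add: emp_probvec)

lemma typesY_probvec: "t \<ge> 1 \<Longrightarrow> j < M2 \<Longrightarrow> typesY M2 t \<omega> j \<in> probvec"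
  unfolding typesY_def by (simp add: emp_probvec)

lemma types_cong:
  assumes "\<And>k. k \<in> window M1 M2 s t \<Longrightarrow> \<omega> k = x k"
  shows "typesX M1 s \<omega> = typesX M1 s x" "typesY M2 t \<omega> = typesY M2 t x"
  using assms unfolding typesX_def typesY_def by (auto intro!: restrict_ext emp_cong)

lemma type_event_eq_UN_cylinder:
  "type_event M1 M2 s t \<Phi> =
    (\<Union>x\<in>{x \<in> PiE (window M1 M2 s t) (\<lambda>_. UNIV). \<Phi> (typesX M1 s x) (typesY M2 t x)}. cylinder (window M1 M2 s t) x)"
  (is "?E = (\<Union>x\<in>?G. ?C x)")
proof (intro equalityI subsetI)
  fix \<omega> assume "\<omega> \<in> ?E"
  moreover have "typesX M1 s (restrict \<omega> (window M1 M2 s t)) = typesX M1 s \<omega>"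
    "typesY M2 t (restrict \<omega> (window M1 M2 s t)) = typesY M2 t \<omega>"
    by (auto intro!: types_cong)
  ultimately have "restrict \<omega> (window M1 M2 s t) \<in> ?G" "\<omega> \<in> ?C (restrict \<omega> (window M1 M2 s t))"
    by (auto simp: type_event_def cylinder_def)
  then show "\<omega> \<in> (\<Union>x\<in>?G. ?C x)" by blast
next
  fix \<omega> assume "\<omega> \<in> (\<Union>x\<in>?G. ?C x)"
  then obtain x where "x \<in> ?G" "\<omega> \<in> ?C x" by blast
  then show "\<omega> \<in> ?E"
    using types_cong[of M1 M2 s t \<omega> x] by (auto simp: type_event_def cylinder_def)
qed

lemma sets_type_event: "type_event M1 M2 s t \<Phi> \<in> sets (obs_space P Q)"
  unfolding type_event_eq_UN_cylinder obs_space_eq_PiM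
  by (intro sets.finite_UN sets_cylinder finite_subset[OF _ finite_PiE[of "window M1 M2 s t" "\<lambda>_. UNIV"]]) auto

definition types_of_size :: "nat \<Rightarrow> ('a::finite \<Rightarrow> real) set" where
  "types_of_size s = PiE UNIV (\<lambda>_. (\<lambda>c. real c / real s) ` {0..s})"

lemma finite_types_of_size: "finite (types_of_size s)"
  unfolding types_of_size_def by (rule finite_PiE) auto

lemma card_types_of_size_le: "card (types_of_size s :: ('a::finite \<Rightarrow> real) set) \<le> (s + 1) ^ CARD('a)"
proof -
  have "card (types_of_size s :: ('a \<Rightarrow> real) set) = (\<Prod>a\<in>(UNIV :: 'a set). card ((\<lambda>c. real c / real s) ` {0..s}))"
    unfolding types_of_size_def by (rule card_PiE) simp
  also have "\<dots> \<le> (\<Prod>a\<in>(UNIV :: 'a set). s + 1)"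
    by (rule prod_mono) (auto intro: order.trans[OF card_image_le])
  finally show ?thesis by simp
qed

lemma emp_in_types_of_size: "emp (f :: nat \<Rightarrow> 'a::finite) s \<in> types_of_size s"
proof -
  have "card {k. k < s \<and> f k = a} \<le> s" for a
    using card_mono[of "{..<s}" "{k. k < s \<and> f k = a}"] by auto
  then show ?thesis unfolding types_of_size_def emp_def PiE_UNIV_domain by auto
qed

lemma card_type_profiles_le:
  "card (PiE {..<M} (\<lambda>_. types_of_size s :: ('a::finite \<Rightarrow> real) set)) \<le> (s + 1) ^ (CARD('a) * M)"
proof -
  have "card (PiE {..<M} (\<lambda>_. types_of_size s :: ('a \<Rightarrow> real) set)) = card (types_of_size s :: ('a \<Rightarrow> real) set) ^ M"
    by (simp add: card_PiE)
  also have "\<dots> \<le> ((s + 1) ^ CARD('a)) ^ M"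
    by (rule power_mono[OF card_types_of_size_le]) simp
  finally show ?thesis by (simp add: power_mult)
qed

lemma card_type_profiles_image_le:
  fixes G :: "'a::finite sample set"
  shows "card ((\<lambda>x. (typesX M1 s x, typesY M2 t x)) ` G) \<le> (s + 1) ^ (CARD('a) * M1) * (t + 1) ^ (CARD('a) * M2)"
proof -
  define profiles where "profiles =
    PiE {..<M1} (\<lambda>_. types_of_size s :: ('a \<Rightarrow> real) set) \<times>
    PiE {..<M2} (\<lambda>_. types_of_size t :: ('a \<Rightarrow> real) set)"
  have "finite profiles"
    unfolding profiles_def by (auto intro!: finite_PiE finite_types_of_size)
  moreover have "(\<lambda>x. (typesX M1 s x, typesY M2 t x)) ` G \<subseteq> profiles"
    unfolding profiles_def typesX_def typesY_def by (auto simp: emp_in_types_of_size)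
  ultimately have "card ((\<lambda>x. (typesX M1 s x, typesY M2 t x)) ` G) \<le> card profiles"
    by (rule card_mono)
  also have "\<dots> \<le> (s + 1) ^ (CARD('a) * M1) * (t + 1) ^ (CARD('a) * M2)"
    unfolding profiles_def card_cartesian_product by (intro mult_le_mono card_type_profiles_le)
  finally show ?thesis .
qed

text \<open>Method of types: for a fixed type profile the likelihoods of the window sequences under
  that profile form a probability distribution, so the sum is at most the number of type profiles.\<close>
lemma sum_own_likelihood_le:
  fixes G :: "'a::finite sample set"
  assumes G: "G \<subseteq> PiE (window M1 M2 s t) (\<lambda>_. UNIV)" and s: "s \<ge> 1" and t: "t \<ge> 1"
  shows "(\<Sum>x\<in>G. \<Prod>k\<in>window M1 M2 s t. by_db (typesX M1 s x) (typesY M2 t x) k (x k))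
    \<le> real ((s + 1) ^ (CARD('a) * M1) * (t + 1) ^ (CARD('a) * M2))"
proof -
  define J where "J = window M1 M2 s t"
  define prof where "prof x = (typesX M1 s x, typesY M2 t x)" for x :: "'a sample"
  define W where "W \<tau> x = (\<Prod>k\<in>J. by_db (fst \<tau>) (snd \<tau>) k (x k))"
    for \<tau> :: "(nat \<Rightarrow> 'a \<Rightarrow> real) \<times> (nat \<Rightarrow> 'a \<Rightarrow> real)" and x :: "'a sample"
  have fin_Pi: "finite (PiE J (\<lambda>_. UNIV :: 'a set))"
    unfolding J_def by (intro finite_PiE) auto
  have fin_G: "finite G"
    using G fin_Pi finite_subset unfolding J_def by blast
  have probvec: "by_db (fst (prof x)) (snd (prof x)) k \<in> probvec" if "k \<in> J" for x k
    using that typesX_probvec[OF s] typesY_probvec[OF t] unfolding J_def window_def prof_def by auto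
  have W_nonneg: "0 \<le> W (prof x0) x" for x0 x
    unfolding W_def using probvec by (intro prod_nonneg) (auto simp: probvec_def)
  have W_sum: "(\<Sum>x\<in>PiE J (\<lambda>_. UNIV). W (prof x0) x) = 1" for x0
    unfolding W_def by (rule sum_PiE_prod_probvec) (auto simp: J_def probvec)
  have "(\<Sum>x\<in>G. W (prof x) x) = (\<Sum>\<tau>\<in>prof ` G. \<Sum>x\<in>{x \<in> G. prof x = \<tau>}. W (prof x) x)"
    by (rule sum.group[symmetric]) (auto simp: fin_G)
  also have "\<dots> = (\<Sum>\<tau>\<in>prof ` G. \<Sum>x\<in>{x \<in> G. prof x = \<tau>}. W \<tau> x)"
    by (intro sum.cong) auto
  also have "\<dots> \<le> (\<Sum>\<tau>\<in>prof ` G. \<Sum>x\<in>PiE J (\<lambda>_. UNIV). W \<tau> x)"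
    using G W_nonneg fin_Pi by (intro sum_mono sum_mono2) (auto simp: J_def)
  also have "\<dots> = (\<Sum>\<tau>\<in>prof ` G. 1)"
    using W_sum by (intro sum.cong) auto
  also have "\<dots> = real (card (prof ` G))"
    by simp
  also have "\<dots> \<le> real ((s + 1) ^ (CARD('a) * M1) * (t + 1) ^ (CARD('a) * M2))"
    unfolding prof_def of_nat_le_iff by (rule card_type_profiles_image_le)
  finally show ?thesis
    unfolding W_def prof_def J_def by simp
qed

lemma emeasure_type_event_le:
  fixes P Q :: "nat \<Rightarrow> 'a::finite pmf"
  assumes s: "s \<ge> 1" and t: "t \<ge> 1" and B: "B \<ge> 0"
    and likelihood: "\<And>x. \<Phi> (typesX M1 s x) (typesY M2 t x) \<Longrightarrow>
       (\<Prod>k\<in>window M1 M2 s t. pmf (by_db P Q k) (x k))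
         \<le> (\<Prod>k\<in>window M1 M2 s t. by_db (typesX M1 s x) (typesY M2 t x) k (x k)) * B"
  shows "emeasure (obs_space P Q) (type_event M1 M2 s t \<Phi>)
    \<le> ennreal (real ((s + 1) ^ (CARD('a) * M1) * (t + 1) ^ (CARD('a) * M2)) * B)"
proof -
  define J where "J = window M1 M2 s t"
  define G where "G = {x \<in> PiE J (\<lambda>_. UNIV :: 'a set). \<Phi> (typesX M1 s x) (typesY M2 t x)}"
  have fin_G: "finite G"
    unfolding G_def by (rule finite_subset[OF _ finite_PiE[of J "\<lambda>_. UNIV"]]) (auto simp: J_def)
  have "emeasure (obs_space P Q) (type_event M1 M2 s t \<Phi>) = emeasure (obs_space P Q) (\<Union>x\<in>G. cylinder J x)"
    unfolding type_event_eq_UN_cylinder G_def J_def ..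
  also have "\<dots> \<le> (\<Sum>x\<in>G. emeasure (obs_space P Q) (cylinder J x))"
    unfolding obs_space_eq_PiM by (rule emeasure_subadditive_finite) (auto simp: fin_G J_def sets_cylinder)
  also have "\<dots> = ennreal (\<Sum>x\<in>G. \<Prod>k\<in>J. pmf (by_db P Q k) (x k))"
    unfolding obs_space_eq_PiM J_def
    by (simp add: emeasure_cylinder prod_ennreal sum_ennreal prod_nonneg)
  also have "\<dots> \<le> ennreal ((\<Sum>x\<in>G. \<Prod>k\<in>J. by_db (typesX M1 s x) (typesY M2 t x) k (x k)) * B)"
    using likelihood unfolding G_def J_def sum_distrib_right by (intro ennreal_leI sum_mono) auto
  also have "\<dots> \<le> ennreal (real ((s + 1) ^ (CARD('a) * M1) * (t + 1) ^ (CARD('a) * M2)) * B)"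
    using sum_own_likelihood_le[of G M1 M2 s t] s t B
    by (intro ennreal_leI mult_right_mono) (auto simp: G_def J_def)
  finally show ?thesis .
qed

lemma ssize_ge: "\<alpha> * real n \<le> real (ssize \<alpha> n)"
  unfolding ssize_def by (rule real_nat_ceiling_ge)

lemma ssize_pos: "\<alpha> > 0 \<Longrightarrow> n \<ge> 1 \<Longrightarrow> ssize \<alpha> n \<ge> 1"
proof -
  assume "\<alpha> > 0" "n \<ge> 1"
  then have "real (ssize \<alpha> n) > 0"
    using ssize_ge[of \<alpha> n] mult_pos_pos[of \<alpha> "real n"] by linarith
  then show ?thesis by simp
qed

lemma ssize_le: "\<alpha> > 0 \<Longrightarrow> n \<ge> 1 \<Longrightarrow> real (ssize \<alpha> n + 1) \<le> (\<alpha> + 2) * real n"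
proof -
  assume "\<alpha> > 0" "n \<ge> 1"
  moreover have "real (ssize \<alpha> n) \<le> \<alpha> * real n + 1"
    unfolding ssize_def using \<open>\<alpha> > 0\<close> by (simp add: of_nat_nat)
  ultimately show ?thesis by (simp add: algebra_simps)
qed

lemma window_likelihood_eq:
  fixes P Q :: "nat \<Rightarrow> 'a::finite pmf" and x :: "'a sample"
  assumes s: "s \<ge> 1" and t: "t \<ge> 1"
    and acX: "\<And>i a. i < M1 \<Longrightarrow> pmf (P i) a = 0 \<Longrightarrow> typesX M1 s x i a = 0"
    and acY: "\<And>j a. j < M2 \<Longrightarrow> pmf (Q j) a = 0 \<Longrightarrow> typesY M2 t x j a = 0"
  shows "(\<Prod>k\<in>window M1 M2 s t. pmf (by_db P Q k) (x k)) =
    (\<Prod>k\<in>window M1 M2 s t. by_db (typesX M1 s x) (typesY M2 t x) k (x k)) *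
    exp (- (real s * (\<Sum>i<M1. klr (typesX M1 s x i) (pmf (P i)))
          + real t * (\<Sum>j<M2. klr (typesY M2 t x j) (pmf (Q j)))))"
proof -
  have rowX: "(\<Prod>k<s. pmf (P i) (x (Inl i, k))) = (\<Prod>k<s. typesX M1 s x i (x (Inl i, k))) *
      exp (- (real s * klr (typesX M1 s x i) (pmf (P i))))" if "i < M1" for i
    using prod_eq_prod_emp_mult_exp_klr[OF s, of "pmf (P i)" "\<lambda>k. x (Inl i, k)"] acX that
    by (simp add: typesX_def)
  have rowY: "(\<Prod>k<t. pmf (Q j) (x (Inr j, k))) = (\<Prod>k<t. typesY M2 t x j (x (Inr j, k))) *
      exp (- (real t * klr (typesY M2 t x j) (pmf (Q j))))" if "j < M2" for j
    using prod_eq_prod_emp_mult_exp_klr[OF t, of "pmf (Q j)" "\<lambda>k. x (Inr j, k)"] acY that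
    by (simp add: typesY_def)
  have "(\<Prod>i<M1. \<Prod>k<s. pmf (P i) (x (Inl i, k))) = (\<Prod>i<M1. (\<Prod>k<s. typesX M1 s x i (x (Inl i, k))) *
      exp (- (real s * klr (typesX M1 s x i) (pmf (P i)))))"
    using rowX by (intro prod.cong) auto
  also have "\<dots> = (\<Prod>i<M1. \<Prod>k<s. typesX M1 s x i (x (Inl i, k))) *
      exp (- (real s * (\<Sum>i<M1. klr (typesX M1 s x i) (pmf (P i)))))"
    by (simp add: prod.distrib exp_sum sum_distrib_left flip: sum_negf)
  finally have X: "(\<Prod>i<M1. \<Prod>k<s. pmf (P i) (x (Inl i, k))) = (\<Prod>i<M1. \<Prod>k<s. typesX M1 s x i (x (Inl i, k))) *
      exp (- (real s * (\<Sum>i<M1. klr (typesX M1 s x i) (pmf (P i)))))" .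
  have "(\<Prod>j<M2. \<Prod>k<t. pmf (Q j) (x (Inr j, k))) = (\<Prod>j<M2. (\<Prod>k<t. typesY M2 t x j (x (Inr j, k))) *
      exp (- (real t * klr (typesY M2 t x j) (pmf (Q j)))))"
    using rowY by (intro prod.cong) auto
  also have "\<dots> = (\<Prod>j<M2. \<Prod>k<t. typesY M2 t x j (x (Inr j, k))) *
      exp (- (real t * (\<Sum>j<M2. klr (typesY M2 t x j) (pmf (Q j)))))"
    by (simp add: prod.distrib exp_sum sum_distrib_left flip: sum_negf)
  finally have Y: "(\<Prod>j<M2. \<Prod>k<t. pmf (Q j) (x (Inr j, k))) = (\<Prod>j<M2. \<Prod>k<t. typesY M2 t x j (x (Inr j, k))) *
      exp (- (real t * (\<Sum>j<M2. klr (typesY M2 t x j) (pmf (Q j)))))" .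
  show ?thesis
    unfolding prod_window by_db_simps X Y minus_add_distrib exp_add by (simp add: mult_ac)
qed

lemma window_likelihood_eq_0:
  fixes P Q :: "nat \<Rightarrow> 'a::finite pmf" and x :: "'a sample"
  assumes "\<not> ((\<forall>i<M1. \<forall>a. pmf (P i) a = 0 \<longrightarrow> typesX M1 s x i a = 0) \<and>
              (\<forall>j<M2. \<forall>a. pmf (Q j) a = 0 \<longrightarrow> typesY M2 t x j a = 0))"
  shows "(\<Prod>k\<in>window M1 M2 s t. pmf (by_db P Q k) (x k)) = 0"
proof -
  from assms consider (X) i a where "i < M1" "pmf (P i) a = 0" "typesX M1 s x i a \<noteq> 0"
    | (Y) j a where "j < M2" "pmf (Q j) a = 0" "typesY M2 t x j a \<noteq> 0"
    by auto
  then have "(\<Prod>i<M1. \<Prod>k<s. pmf (P i) (x (Inl i, k))) = 0 \<or> (\<Prod>j<M2. \<Prod>k<t. pmf (Q j) (x (Inr j, k))) = 0"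
  proof cases
    case X
    then have "(\<Prod>k<s. pmf (P i) (x (Inl i, k))) = 0"
      by (intro prod_eq_0_if_not_abs_cont[of _ a]) (auto simp: typesX_def)
    then show ?thesis using X(1) by (intro disjI1 prod_zero) auto
  next
    case Y
    then have "(\<Prod>k<t. pmf (Q j) (x (Inr j, k))) = 0"
      by (intro prod_eq_0_if_not_abs_cont[of _ a]) (auto simp: typesY_def)
    then show ?thesis using Y(1) by (intro disjI2 prod_zero) auto
  qed
  then show ?thesis unfolding prod_window by auto
qed

lemma Eexp_eq_klr:
  assumes "\<forall>i<M1. \<forall>a. pmf (P i) a = 0 \<longrightarrow> \<Omega> i a = 0" and "\<forall>j<M2. \<forall>a. pmf (Q j) a = 0 \<longrightarrow> \<Psi> j a = 0"
  shows "Eexp M1 M2 \<alpha> \<beta> P Q \<Omega> \<Psi> =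
    ereal (\<alpha> * (\<Sum>i<M1. klr (\<Omega> i) (pmf (P i))) + \<beta> * (\<Sum>j<M2. klr (\<Psi> j) (pmf (Q j))))"
  using assms unfolding Eexp_def kl_def by (simp add: sum_distrib_left)

lemma window_likelihood_le:
  fixes P Q :: "nat \<Rightarrow> 'a::finite pmf" and x :: "'a sample"
  assumes \<alpha>: "\<alpha> > 0" and \<beta>: "\<beta> > 0" and n: "n \<ge> 1"
    and c: "ereal c \<le> Eexp M1 M2 \<alpha> \<beta> P Q (typesX M1 (ssize \<alpha> n) x) (typesY M2 (ssize \<beta> n) x)"
  shows "(\<Prod>k\<in>window M1 M2 (ssize \<alpha> n) (ssize \<beta> n). pmf (by_db P Q k) (x k))
    \<le> (\<Prod>k\<in>window M1 M2 (ssize \<alpha> n) (ssize \<beta> n).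
         by_db (typesX M1 (ssize \<alpha> n) x) (typesY M2 (ssize \<beta> n) x) k (x k)) * exp (- (real n * c))"
proof -
  define s t where "s = ssize \<alpha> n" and "t = ssize \<beta> n"
  have s: "s \<ge> 1" and t: "t \<ge> 1" unfolding s_def t_def using ssize_pos \<alpha> \<beta> n by auto
  define X Y where "X = typesX M1 s x" and "Y = typesY M2 t x"
  define own where "own = (\<Prod>k\<in>window M1 M2 s t. by_db X Y k (x k))"
  have own_nonneg: "0 \<le> own"
    unfolding own_def X_def Y_def typesX_def typesY_def window_def
    by (intro prod_nonneg) (auto simp: emp_nonneg)
  show ?thesis
  proof (cases "(\<forall>i<M1. \<forall>a. pmf (P i) a = 0 \<longrightarrow> X i a = 0) \<and> (\<forall>j<M2. \<forall>a. pmf (Q j) a = 0 \<longrightarrow> Y j a = 0)")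
    case True
    define K L where "K = (\<Sum>i<M1. klr (X i) (pmf (P i)))" and "L = (\<Sum>j<M2. klr (Y j) (pmf (Q j)))"
    have "K \<ge> 0" "L \<ge> 0"
      unfolding K_def L_def X_def Y_def using True s t
      by (auto intro!: sum_nonneg klr_nonneg typesX_probvec typesY_probvec simp: sum_pmf_eq_1 X_def Y_def)
    have "c \<le> \<alpha> * K + \<beta> * L"
      using c Eexp_eq_klr[of M1 P X M2 Q Y] True unfolding X_def Y_def s_def t_def K_def L_def by simp
    then have "real n * c \<le> real n * (\<alpha> * K + \<beta> * L)"
      by (simp add: mult_left_mono)
    also have "\<dots> = (\<alpha> * real n) * K + (\<beta> * real n) * L"
      by (simp add: algebra_simps)
    also have "\<dots> \<le> real s * K + real t * L"
      unfolding s_def t_def using ssize_ge \<open>K \<ge> 0\<close> \<open>L \<ge> 0\<close> by (intro add_mono mult_right_mono) auto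
    finally have "exp (- (real s * K + real t * L)) \<le> exp (- (real n * c))"
      by simp
    moreover have "(\<Prod>k\<in>window M1 M2 s t. pmf (by_db P Q k) (x k)) = own * exp (- (real s * K + real t * L))"
      unfolding own_def K_def L_def X_def Y_def
      by (rule window_likelihood_eq[OF s t]) (use True in \<open>auto simp: X_def Y_def\<close>)
    ultimately show ?thesis
      using own_nonneg unfolding s_def t_def own_def X_def Y_def by (simp add: mult_left_mono)
  next
    case False
    then have zero: "(\<Prod>k\<in>window M1 M2 s t. pmf (by_db P Q k) (x k)) = 0"
      unfolding X_def Y_def by (rule window_likelihood_eq_0)
    show ?thesis
      using own_nonneg
      unfolding s_def[symmetric] t_def[symmetric] X_def[symmetric] Y_def[symmetric] own_def[symmetric] zero
      by simp
  qed
qed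

definition Eexp_ge_on :: "nat \<Rightarrow> nat \<Rightarrow> real \<Rightarrow> real \<Rightarrow> (nat \<Rightarrow> 'a::finite pmf) \<Rightarrow> (nat \<Rightarrow> 'a pmf) \<Rightarrow> ereal
    \<Rightarrow> ((nat \<Rightarrow> 'a \<Rightarrow> real) \<Rightarrow> (nat \<Rightarrow> 'a \<Rightarrow> real) \<Rightarrow> bool) \<Rightarrow> bool" where
  "Eexp_ge_on M1 M2 \<alpha> \<beta> P Q L \<Phi> \<longleftrightarrow> (\<forall>\<Omega> \<Psi>. (\<forall>i<M1. \<Omega> i \<in> probvec) \<longrightarrow> (\<forall>j<M2. \<Psi> j \<in> probvec) \<longrightarrow>
     \<Phi> \<Omega> \<Psi> \<longrightarrow> L \<le> Eexp M1 M2 \<alpha> \<beta> P Q \<Omega> \<Psi>)"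

lemma Eexp_ge_onI:
  "(\<And>\<Omega> \<Psi>. \<forall>i<M1. \<Omega> i \<in> probvec \<Longrightarrow> \<forall>j<M2. \<Psi> j \<in> probvec \<Longrightarrow> \<Phi> \<Omega> \<Psi> \<Longrightarrow> L \<le> Eexp M1 M2 \<alpha> \<beta> P Q \<Omega> \<Psi>)
    \<Longrightarrow> Eexp_ge_on M1 M2 \<alpha> \<beta> P Q L \<Phi>"
  unfolding Eexp_ge_on_def by blast

lemma Eexp_ge_onD:
  "Eexp_ge_on M1 M2 \<alpha> \<beta> P Q L \<Phi> \<Longrightarrow> \<forall>i<M1. \<Omega> i \<in> probvec \<Longrightarrow> \<forall>j<M2. \<Psi> j \<in> probvec \<Longrightarrow> \<Phi> \<Omega> \<Psi> \<Longrightarrow>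
    L \<le> Eexp M1 M2 \<alpha> \<beta> P Q \<Omega> \<Psi>"
  unfolding Eexp_ge_on_def by blast

abbreviation stage_event :: "nat \<Rightarrow> nat \<Rightarrow> real \<Rightarrow> real \<Rightarrow> nat
    \<Rightarrow> ((nat \<Rightarrow> 'a \<Rightarrow> real) \<Rightarrow> (nat \<Rightarrow> 'a \<Rightarrow> real) \<Rightarrow> bool) \<Rightarrow> 'a::finite sample set" where
  "stage_event M1 M2 \<alpha> \<beta> n \<Phi> \<equiv> type_event M1 M2 (ssize \<alpha> n) (ssize \<beta> n) \<Phi>"

lemma emeasure_stage_event_le:
  fixes P Q :: "nat \<Rightarrow> 'a::finite pmf"
  assumes \<alpha>: "\<alpha> > 0" and \<beta>: "\<beta> > 0" and n: "n \<ge> 1"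
    and gap: "Eexp_ge_on M1 M2 \<alpha> \<beta> P Q (ereal c) \<Phi>"
  shows "emeasure (obs_space P Q) (stage_event M1 M2 \<alpha> \<beta> n \<Phi>)
    \<le> ennreal (real ((ssize \<alpha> n + 1) ^ (CARD('a) * M1) * (ssize \<beta> n + 1) ^ (CARD('a) * M2))
               * exp (- (real n * c)))"
proof (rule emeasure_type_event_le[OF ssize_pos[OF \<alpha> n] ssize_pos[OF \<beta> n]])
  fix x :: "'a sample"
  assume "\<Phi> (typesX M1 (ssize \<alpha> n) x) (typesY M2 (ssize \<beta> n) x)"
  then have "ereal c \<le> Eexp M1 M2 \<alpha> \<beta> P Q (typesX M1 (ssize \<alpha> n) x) (typesY M2 (ssize \<beta> n) x)"
    using typesX_probvec[OF ssize_pos[OF \<alpha> n]] typesY_probvec[OF ssize_pos[OF \<beta> n]]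
    by (intro Eexp_ge_onD[OF gap]) auto
  then show "(\<Prod>k\<in>window M1 M2 (ssize \<alpha> n) (ssize \<beta> n). pmf (by_db P Q k) (x k))
      \<le> (\<Prod>k\<in>window M1 M2 (ssize \<alpha> n) (ssize \<beta> n).
           by_db (typesX M1 (ssize \<alpha> n) x) (typesY M2 (ssize \<beta> n) x) k (x k)) * exp (- (real n * c))"
    by (rule window_likelihood_le[OF \<alpha> \<beta> n])
qed simp

section \<open>Exponentially small tails\<close>

lemma eventually_poly_mult_exp_le:
  assumes "c2 < c"
  shows "eventually (\<lambda>n. C * real n ^ K * exp (- (real n * c)) \<le> exp (- (real n * c2))) sequentially"
proof -
  have "c - c2 > 0" using assms by simp
  then have "((\<lambda>n. C * real n ^ K * exp (- (real n * (c - c2)))) \<longlongrightarrow> 0) sequentially"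
    by real_asymp
  then have "eventually (\<lambda>n. C * real n ^ K * exp (- (real n * (c - c2))) \<le> 1) sequentially"
    using order_tendstoD(2)[OF _ zero_less_one] by (blast intro: eventually_mono less_imp_le)
  then show ?thesis
  proof (rule eventually_mono)
    fix n
    assume "C * real n ^ K * exp (- (real n * (c - c2))) \<le> 1"
    then have "(C * real n ^ K * exp (- (real n * (c - c2)))) * exp (- (real n * c2)) \<le> exp (- (real n * c2))"
      by (simp add: mult_left_le_one_le)
    then show "C * real n ^ K * exp (- (real n * c)) \<le> exp (- (real n * c2))"
      by (simp add: algebra_simps flip: exp_add)
  qed
qed

lemma eventually_tail_suminf_le:
  fixes a :: "nat \<Rightarrow> ennreal"
  assumes a: "eventually (\<lambda>n. a n \<le> ennreal (exp (- (real n * c)))) sequentially"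
    and c': "0 \<le> c'" "c' < c"
  shows "eventually (\<lambda>N. (\<Sum>n. if N - 1 \<le> n then a n else 0) \<le> ennreal (exp (- (real N * c')))) sequentially"
proof -
  obtain n0 where n0: "\<And>n. n \<ge> n0 \<Longrightarrow> a n \<le> ennreal (exp (- (real n * c)))"
    using a unfolding eventually_sequentially by blast
  define r where "r = exp (- c)"
  have r: "0 < r" "r < 1" using c' by (auto simp: r_def)
  have "c - c' > 0" using c' by simp
  then have "((\<lambda>N. exp c / (1 - r) * exp (- (real N * (c - c')))) \<longlongrightarrow> 0) sequentially"
    by real_asymp
  then have ev: "eventually (\<lambda>N. exp c / (1 - r) * exp (- (real N * (c - c'))) \<le> 1) sequentially"
    using order_tendstoD(2)[OF _ zero_less_one] by (blast intro: eventually_mono less_imp_le)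
  show ?thesis
    using ev eventually_ge_at_top[of "n0 + 1"]
  proof eventually_elim
    case (elim N)
    define L where "L = N - 1"
    have L: "L \<ge> n0" "real N = real L + 1" using elim(2) by (auto simp: L_def)
    have geom: "(\<lambda>n. if L \<le> n then r ^ n else 0) sums (r ^ L / (1 - r))"
    proof -
      have "(\<lambda>i. r ^ L * r ^ i) sums (r ^ L * (1 / (1 - r)))"
        by (rule sums_mult[OF geometric_sums]) (use r in simp)
      then have "(\<lambda>i. if L \<le> i + L then r ^ (i + L) else 0) sums (r ^ L / (1 - r))"
        by (simp add: power_add mult.commute)
      then show ?thesis by (subst (asm) sums_zero_iff_shift) auto
    qed
    have "(\<Sum>n. if N - 1 \<le> n then a n else 0) \<le> (\<Sum>n. ennreal (if L \<le> n then r ^ n else 0))"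
      using n0 L(1) by (intro suminf_le) (auto simp: L_def r_def exp_of_nat_mult[symmetric] mult.commute)
    also have "\<dots> = ennreal (r ^ L / (1 - r))"
      using geom r by (simp add: suminf_ennreal2 sums_summable sums_unique[symmetric])
    also have "r ^ L / (1 - r) = (exp c / (1 - r) * exp (- (real N * (c - c')))) * exp (- (real N * c'))"
      unfolding L(2) by (simp add: r_def exp_of_nat_mult[symmetric] field_simps flip: exp_add)
    also have "\<dots> \<le> exp (- (real N * c'))"
      using mult_right_mono[OF elim(1) exp_ge_zero[of "- (real N * c')"]] by simp
    finally show ?case by (simp add: ennreal_leI)
  qed
qed

lemma eventually_tail_stage_events_le:
  fixes P Q :: "nat \<Rightarrow> 'a::finite pmf"
  assumes \<alpha>: "\<alpha> > 0" and \<beta>: "\<beta> > 0" and c': "0 \<le> c'" "c' < c"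
    and gap: "Eexp_ge_on M1 M2 \<alpha> \<beta> P Q (ereal c) \<Phi>"
  shows "eventually (\<lambda>N. (\<Sum>n. if N - 1 \<le> n then emeasure (obs_space P Q) (stage_event M1 M2 \<alpha> \<beta> n \<Phi>) else 0)
    \<le> ennreal (exp (- (real N * c')))) sequentially"
proof -
  define c2 where "c2 = (c + c') / 2"
  define A B where "A = CARD('a) * M1" and "B = CARD('a) * M2"
  have "eventually (\<lambda>n. (\<alpha> + 2) ^ A * (\<beta> + 2) ^ B * real n ^ (A + B) * exp (- (real n * c))
      \<le> exp (- (real n * c2))) sequentially"
    by (rule eventually_poly_mult_exp_le) (use c' in \<open>simp add: c2_def\<close>)
  then have "eventually (\<lambda>n. emeasure (obs_space P Q) (stage_event M1 M2 \<alpha> \<beta> n \<Phi>)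
      \<le> ennreal (exp (- (real n * c2)))) sequentially"
    using eventually_ge_at_top[of 1]
  proof eventually_elim
    case (elim n)
    have "real ((ssize \<alpha> n + 1) ^ A * (ssize \<beta> n + 1) ^ B) \<le> ((\<alpha> + 2) * real n) ^ A * ((\<beta> + 2) * real n) ^ B"
      using ssize_le[OF \<alpha> elim(2)] ssize_le[OF \<beta> elim(2)] by (simp add: mult_mono power_mono)
    also have "\<dots> = (\<alpha> + 2) ^ A * (\<beta> + 2) ^ B * real n ^ (A + B)"
      by (simp add: power_mult_distrib power_add)
    finally have poly: "real ((ssize \<alpha> n + 1) ^ A * (ssize \<beta> n + 1) ^ B) \<le> (\<alpha> + 2) ^ A * (\<beta> + 2) ^ B * real n ^ (A + B)" .
    have "real ((ssize \<alpha> n + 1) ^ A * (ssize \<beta> n + 1) ^ B) * exp (- (real n * c)) \<le> exp (- (real n * c2))"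
      using mult_right_mono[OF poly exp_ge_zero[of "- (real n * c)"]] elim(1) by linarith
    then have "ennreal (real ((ssize \<alpha> n + 1) ^ A * (ssize \<beta> n + 1) ^ B) * exp (- (real n * c)))
        \<le> ennreal (exp (- (real n * c2)))"
      by (rule ennreal_leI)
    with emeasure_stage_event_le[OF \<alpha> \<beta> elim(2) gap, folded A_def B_def] show ?case
      by (rule order.trans)
  qed
  then show ?thesis
    by (rule eventually_tail_suminf_le[OF _ c'(1)]) (use c' in \<open>simp add: c2_def\<close>)
qed

section \<open>The stopping time and the error exponents\<close>

lemma tau_eq_enatD:
  assumes "tau M1 M2 \<alpha> \<beta> l1 l2 l3 N \<omega> = enat n"
  shows "N - 1 \<le> n" and "stops M1 M2 \<alpha> \<beta> l1 l2 l3 n \<omega>"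
    and "\<And>k. N - 1 \<le> k \<Longrightarrow> k < n \<Longrightarrow> \<not> stops M1 M2 \<alpha> \<beta> l1 l2 l3 k \<omega>"
proof -
  let ?P = "\<lambda>n. N - 1 \<le> n \<and> stops M1 M2 \<alpha> \<beta> l1 l2 l3 n \<omega>"
  have ex: "\<exists>n. ?P n" and n: "n = (LEAST n. ?P n)"
    using assms unfolding tau_def by (auto split: if_splits)
  show "N - 1 \<le> n" "stops M1 M2 \<alpha> \<beta> l1 l2 l3 n \<omega>"
    using LeastI_ex[OF ex] unfolding n[symmetric] by auto
  show "\<not> stops M1 M2 \<alpha> \<beta> l1 l2 l3 k \<omega>" if "N - 1 \<le> k" "k < n" for k
    using not_less_Least[of k ?P] that unfolding n by auto
qed

lemma tau_eq_infinityD: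
  "tau M1 M2 \<alpha> \<beta> l1 l2 l3 N \<omega> = \<infinity> \<Longrightarrow> N - 1 \<le> n \<Longrightarrow> \<not> stops M1 M2 \<alpha> \<beta> l1 l2 l3 n \<omega>"
  unfolding tau_def by (auto split: if_splits)

lemma decision_eq_SomeD:
  assumes "decision M1 M2 \<alpha> \<beta> l1 l2 l3 N \<omega> = Some m"
  obtains n where "tau M1 M2 \<alpha> \<beta> l1 l2 l3 N \<omega> = enat n" and "m \<in> Midx M1 M2"
    and "evD M1 M2 \<alpha> \<beta> l2 l3 m n \<omega>"
proof (cases "tau M1 M2 \<alpha> \<beta> l1 l2 l3 N \<omega>")
  case (enat n)
  with assms obtain m0 where m0: "m0 \<in> Midx M1 M2" "evD M1 M2 \<alpha> \<beta> l2 l3 m0 n \<omega>"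
    and m: "m = (THE m. m \<in> Midx M1 M2 \<and> evD M1 M2 \<alpha> \<beta> l2 l3 m n \<omega>)"
    unfolding decision_def by (auto split: if_splits)
  have "m = m0"
    unfolding m by (rule the_equality) (use m0 in \<open>auto simp: evD_def\<close>)
  then show ?thesis using that enat m0 by blast
qed (use assms in \<open>simp add: decision_def\<close>)

lemma decision_eq_NoneD:
  assumes "tau M1 M2 \<alpha> \<beta> l1 l2 l3 N \<omega> = enat n" and "decision M1 M2 \<alpha> \<beta> l1 l2 l3 N \<omega> = None"
  shows "evA M1 M2 \<alpha> \<beta> l1 n \<omega>"
  using assms tau_eq_enatD(2)[OF assms(1)] unfolding decision_def stops_def by (auto split: if_splits)

lemma of_nat_le_suminf_indicator:
  assumes "\<And>n. a \<le> n \<Longrightarrow> n < a + K \<Longrightarrow> \<omega> \<in> F n"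
  shows "of_nat K \<le> (\<Sum>n. indicator (if a \<le> n then F n else {}) \<omega> :: ennreal)"
proof -
  have "(of_nat K :: ennreal) = (\<Sum>n\<in>{a..<a + K}. indicator (if a \<le> n then F n else {}) \<omega>)"
    using assms by simp
  also have "\<dots> \<le> (\<Sum>n. indicator (if a \<le> n then F n else {}) \<omega>)"
    by (rule sum_le_suminf) auto
  finally show ?thesis .
qed

lemma tau_le_count:
  assumes "\<And>n. N - 1 \<le> n \<Longrightarrow> \<not> stops M1 M2 \<alpha> \<beta> l1 l2 l3 n \<omega> \<Longrightarrow> \<omega> \<in> F n"
  shows "ennreal_of_enat (tau M1 M2 \<alpha> \<beta> l1 l2 l3 N \<omega>)
    \<le> of_nat (N - 1) + (\<Sum>n. indicator (if N - 1 \<le> n then F n else {}) \<omega>)"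
proof (cases "tau M1 M2 \<alpha> \<beta> l1 l2 l3 N \<omega>")
  case (enat T)
  have "of_nat (T - (N - 1)) \<le> (\<Sum>n. indicator (if N - 1 \<le> n then F n else {}) \<omega> :: ennreal)"
    using assms tau_eq_enatD(3)[OF enat] by (intro of_nat_le_suminf_indicator) auto
  then have "of_nat (N - 1) + of_nat (T - (N - 1))
      \<le> of_nat (N - 1) + (\<Sum>n. indicator (if N - 1 \<le> n then F n else {}) \<omega> :: ennreal)"
    by (rule add_left_mono)
  then show ?thesis
    using tau_eq_enatD(1)[OF enat] enat by (simp flip: of_nat_add)
next
  case infinity
  let ?S = "\<Sum>n. indicator (if N - 1 \<le> n then F n else {}) \<omega> :: ennreal"
  have bound: "of_nat K \<le> ?S" for K
    using assms tau_eq_infinityD[OF infinity] by (intro of_nat_le_suminf_indicator) auto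
  have "?S = \<infinity>"
  proof (rule ccontr)
    assume "?S \<noteq> \<infinity>"
    then obtain K where "?S < of_nat K"
      using ennreal_Ex_less_of_nat by (auto simp: less_top)
    with bound[of K] show False by simp
  qed
  then show ?thesis by simp
qed

lemma expected_tau_le:
  fixes P Q :: "nat \<Rightarrow> 'a::finite pmf"
  assumes \<alpha>: "\<alpha> > 0" and \<beta>: "\<beta> > 0" and c: "c > 0"
    and gap: "Eexp_ge_on M1 M2 \<alpha> \<beta> P Q (ereal c) \<Phi>"
    and continues: "\<And>n \<omega>. n \<ge> 1 \<Longrightarrow> \<not> stops M1 M2 \<alpha> \<beta> l1 l2 l3 n \<omega> \<Longrightarrow>
      \<omega> \<in> stage_event M1 M2 \<alpha> \<beta> n \<Phi>"
  shows "eventually (\<lambda>N. (\<integral>\<^sup>+ \<omega>. ennreal_of_enat (tau M1 M2 \<alpha> \<beta> l1 l2 l3 N \<omega>) \<partial>obs_space P Q)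
    \<le> ennreal (real N)) sequentially"
proof -
  have "eventually (\<lambda>N. (\<Sum>n. if N - 1 \<le> n then emeasure (obs_space P Q) (stage_event M1 M2 \<alpha> \<beta> n \<Phi>) else 0)
    \<le> ennreal (exp (- (real N * 0)))) sequentially"
    by (rule eventually_tail_stage_events_le[OF \<alpha> \<beta> order_refl c gap])
  then show ?thesis
    using eventually_ge_at_top[of 2]
  proof eventually_elim
  case (elim N)
  interpret prob_space "obs_space P Q" by (rule prob_space_obs_space)
  define F where "F n = (if N - 1 \<le> n then stage_event M1 M2 \<alpha> \<beta> n \<Phi> else {})" for n
  have F_sets: "F n \<in> sets (obs_space P Q)" for n
    by (simp add: F_def sets_type_event)
  have "(\<integral>\<^sup>+ \<omega>. ennreal_of_enat (tau M1 M2 \<alpha> \<beta> l1 l2 l3 N \<omega>) \<partial>obs_space P Q)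
      \<le> (\<integral>\<^sup>+ \<omega>. of_nat (N - 1) + (\<Sum>n. indicator (F n) \<omega>) \<partial>obs_space P Q)"
    using continues elim(2) unfolding F_def by (intro nn_integral_mono tau_le_count) auto
  also have "\<dots> = of_nat (N - 1) + (\<Sum>n. emeasure (obs_space P Q) (F n))"
    using F_sets emeasure_space_1 by (simp add: nn_integral_add nn_integral_suminf)
  also have "(\<Sum>n. emeasure (obs_space P Q) (F n)) \<le> 1"
    using elim(1) by (simp add: F_def if_distrib cong: if_cong)
  also have "of_nat (N - 1) + 1 = (of_nat (Suc (N - 1)) :: ennreal)"
    by (simp only: of_nat_Suc add.commute)
  also have "\<dots> = ennreal (real N)"
    using elim(2) by (simp add: ennreal_of_nat_eq_real_of_nat del: of_nat_Suc)
  finally show ?case by (simp add: add_left_mono)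
  qed
qed

lemma liminf_neglog_div_ge:
  fixes p :: "nat \<Rightarrow> real" and L :: ereal
  assumes p: "\<And>N. 0 \<le> p N" "\<And>N. p N \<le> 1"
    and decay: "\<And>c. 0 < c \<Longrightarrow> ereal c < L \<Longrightarrow> eventually (\<lambda>N. p N \<le> exp (- (real N * c))) sequentially"
  shows "L \<le> liminf (\<lambda>N. neglog (p N) / ereal (real N))"
proof (rule dense_le)
  fix y assume y: "y < L"
  have nonneg: "eventually (\<lambda>N. 0 \<le> neglog (p N) / ereal (real N)) sequentially"
    using eventually_ge_at_top[of 1]
  proof eventually_elim
    case (elim N)
    have "0 \<le> neglog (p N)" using p[of N] unfolding neglog_def by (auto simp: ln_le_zero_iff)
    then show ?case using elim by (cases "neglog (p N)") auto
  qed
  show "y \<le> liminf (\<lambda>N. neglog (p N) / ereal (real N))"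
  proof (cases "y \<le> 0")
    case True
    then show ?thesis using Liminf_bounded[OF nonneg] by simp
  next
    case False
    with y obtain c where c: "y = ereal c" "c > 0" by (cases y) auto
    with y have "ereal c < L" by simp
    have "eventually (\<lambda>N. ereal c \<le> neglog (p N) / ereal (real N)) sequentially"
      using decay[OF c(2) \<open>ereal c < L\<close>] eventually_ge_at_top[of 1]
    proof eventually_elim
      case (elim N)
      show ?case
      proof (cases "p N = 0")
        case False
        then have "0 < p N" using p(1)[of N] by linarith
        then have "ln (p N) \<le> ln (exp (- (real N * c)))"
          using elim(1) by (subst ln_le_cancel_iff) auto
        then have "real N * c \<le> - ln (p N)"
          by simp
        then show ?thesis using False elim(2) by (simp add: neglog_def field_simps)
      qed (use elim in \<open>simp add: neglog_def\<close>)
    qed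
    then show ?thesis unfolding c(1) by (rule Liminf_bounded)
  qed
qed

lemma emeasure_UN_atLeast_le:
  assumes "\<And>n. F n \<in> sets M"
  shows "emeasure M (\<Union>n\<in>{m..}. F n) \<le> (\<Sum>n. if m \<le> n then emeasure M (F n) else 0)"
proof -
  have "emeasure M (\<Union>n\<in>{m..}. F n) = emeasure M (\<Union>n. if m \<le> n then F n else {})"
    by (rule arg_cong[where f = "emeasure M"]) auto
  also have "\<dots> \<le> (\<Sum>n. emeasure M (if m \<le> n then F n else {}))"
    using assms by (intro emeasure_subadditive_countably) auto
  also have "\<dots> = (\<Sum>n. if m \<le> n then emeasure M (F n) else 0)"
    by (rule arg_cong[where f = suminf]) auto
  finally show ?thesis .
qed

lemma error_exponent_ge:
  fixes P Q :: "nat \<Rightarrow> 'a::finite pmf" and E :: "nat \<Rightarrow> 'a sample set" and L :: ereal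
  assumes \<alpha>: "\<alpha> > 0" and \<beta>: "\<beta> > 0"
    and gap: "Eexp_ge_on M1 M2 \<alpha> \<beta> P Q L \<Phi>"
    and cover: "eventually (\<lambda>N. E N \<subseteq> (\<Union>n\<in>{N - 1..}. stage_event M1 M2 \<alpha> \<beta> n \<Phi>)) sequentially"
  shows "L \<le> liminf (\<lambda>N. neglog (measure (obs_space P Q) (E N)) / ereal (real N))"
proof (rule liminf_neglog_div_ge)
  interpret prob_space "obs_space P Q" by (rule prob_space_obs_space)
  show "0 \<le> measure (obs_space P Q) (E N)" "measure (obs_space P Q) (E N) \<le> 1" for N
    by (simp_all add: prob_le_1)
  fix c :: real assume c: "0 < c" "ereal c < L"
  then obtain c2 where c2: "c < c2" "ereal c2 < L"
    using ereal_dense2[OF c(2)] by auto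
  have "Eexp_ge_on M1 M2 \<alpha> \<beta> P Q (ereal c2) \<Phi>"
    using gap c2(2) unfolding Eexp_ge_on_def by (auto intro: order.trans[OF less_imp_le])
  then have "eventually (\<lambda>N. (\<Sum>n. if N - 1 \<le> n then emeasure (obs_space P Q) (stage_event M1 M2 \<alpha> \<beta> n \<Phi>) else 0)
    \<le> ennreal (exp (- (real N * c)))) sequentially"
    by (rule eventually_tail_stage_events_le[OF \<alpha> \<beta> less_imp_le[OF c(1)] c2(1)])
  then show "eventually (\<lambda>N. measure (obs_space P Q) (E N) \<le> exp (- (real N * c))) sequentially"
    using cover
  proof eventually_elim
    case (elim N)
    have "emeasure (obs_space P Q) (E N) \<le> emeasure (obs_space P Q) (\<Union>n\<in>{N - 1..}. stage_event M1 M2 \<alpha> \<beta> n \<Phi>)"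
      using elim(2) by (intro emeasure_mono) (auto intro: sets_type_event)
    also have "\<dots> \<le> ennreal (exp (- (real N * c)))"
      using emeasure_UN_atLeast_le[OF sets_type_event] elim(1) by (rule order.trans)
    finally show ?case by (simp add: measure_def enn2real_leI)
  qed
qed

section \<open>The generalized Jensen-Shannon divergence\<close>

lemma mixR_probvec:
  assumes "p \<in> probvec" "q \<in> probvec" "\<alpha> > 0" "\<beta> > 0"
  shows "mixR \<alpha> \<beta> p (q :: 'a::finite \<Rightarrow> real) \<in> probvec"
proof -
  have "sum (mixR \<alpha> \<beta> p q) UNIV = (\<alpha> * sum p UNIV + \<beta> * sum q UNIV) / (\<alpha> + \<beta>)"
    unfolding mixR_def sum_divide_distrib[symmetric] by (simp add: sum.distrib sum_distrib_left)
  then show ?thesis using assms unfolding probvec_def mixR_def by auto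
qed

lemma mixR_eq_0_iff:
  assumes "p \<in> probvec" "q \<in> probvec" "\<alpha> > 0" "\<beta> > 0"
  shows "mixR \<alpha> \<beta> p q a = 0 \<longleftrightarrow> p a = 0 \<and> q a = 0"
proof -
  have "p a \<ge> 0" "q a \<ge> 0" using assms(1,2) by (auto simp: probvec_def)
  then show ?thesis
    using assms(3,4) by (auto simp: mixR_def add_nonneg_eq_0_iff)
qed

lemma GJS_nonneg:
  assumes "p \<in> probvec" "q \<in> probvec" "\<alpha> > 0" "\<beta> > 0"
  shows "0 \<le> GJS p (q :: 'a::finite \<Rightarrow> real) \<alpha> \<beta>"
proof -
  have R: "mixR \<alpha> \<beta> p q \<in> probvec" by (rule mixR_probvec[OF assms])
  then have "0 \<le> klr p (mixR \<alpha> \<beta> p q)" "0 \<le> klr q (mixR \<alpha> \<beta> p q)"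
    using mixR_eq_0_iff[OF assms] assms(1,2) by (auto intro!: klr_nonneg simp: probvec_def)
  then show ?thesis unfolding GJS_def using assms by simp
qed

lemma GJS_self: "\<alpha> > 0 \<Longrightarrow> \<beta> > 0 \<Longrightarrow> GJS p p \<alpha> \<beta> = 0"
proof -
  assume "\<alpha> > 0" "\<beta> > 0"
  then have "mixR \<alpha> \<beta> p p = p" by (auto simp: mixR_def field_simps)
  moreover have "klr p p = 0" unfolding klr_def by (rule sum.neutral) auto
  ultimately show ?thesis by (simp add: GJS_def)
qed

lemma klr_term_diff:
  fixes u v w :: real
  assumes "u \<ge> 0" "v > 0" "w > 0"
  shows "(if u = 0 then 0 else u * ln (u / v)) - (if u = 0 then 0 else u * ln (u / w)) = u * (ln w - ln v)"
  using assms by (cases "u = 0") (simp_all add: ln_div algebra_simps)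

lemma klr_compensation:
  fixes p q r :: "'a::finite \<Rightarrow> real"
  assumes p: "p \<in> probvec" and q: "q \<in> probvec" and r: "r \<in> probvec" and \<alpha>: "\<alpha> > 0" and \<beta>: "\<beta> > 0"
    and ac: "\<And>x. r x = 0 \<Longrightarrow> p x = 0 \<and> q x = 0"
  shows "\<alpha> * klr p r + \<beta> * klr q r = GJS p q \<alpha> \<beta> + (\<alpha> + \<beta>) * klr (mixR \<alpha> \<beta> p q) r"
proof -
  let ?R = "mixR \<alpha> \<beta> p q"
  let ?f = "\<lambda>u v :: real. if u = 0 then 0 else u * ln (u / v)"
  have "\<alpha> * ?f (p x) (r x) + \<beta> * ?f (q x) (r x) = \<alpha> * ?f (p x) (?R x) + \<beta> * ?f (q x) (?R x) + (\<alpha> + \<beta>) * ?f (?R x) (r x)"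
    for x
  proof (cases "?R x = 0")
    case True
    then show ?thesis using mixR_eq_0_iff[OF p q \<alpha> \<beta>] by simp
  next
    case False
    then have Rx: "?R x > 0" using mixR_probvec[OF p q \<alpha> \<beta>] by (auto simp: probvec_def order.order_iff_strict)
    have "r x \<noteq> 0" using False ac mixR_eq_0_iff[OF p q \<alpha> \<beta>] by blast
    then have rx: "r x > 0" using r by (auto simp: probvec_def order.order_iff_strict)
    have "\<alpha> * (?f (p x) (r x) - ?f (p x) (?R x)) + \<beta> * (?f (q x) (r x) - ?f (q x) (?R x))
        = (\<alpha> * p x + \<beta> * q x) * (ln (?R x) - ln (r x))"
      using p q unfolding probvec_def
      by (simp add: klr_term_diff[OF _ rx Rx] algebra_simps)
    also have "\<dots> = (\<alpha> + \<beta>) * ?f (?R x) (r x)"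
      using False Rx rx \<alpha> \<beta> by (simp add: mixR_def ln_div ln_mult)
    finally show ?thesis by (simp add: algebra_simps)
  qed
  then have "(\<Sum>x\<in>UNIV. \<alpha> * ?f (p x) (r x) + \<beta> * ?f (q x) (r x)) =
      (\<Sum>x\<in>UNIV. \<alpha> * ?f (p x) (?R x) + \<beta> * ?f (q x) (?R x) + (\<alpha> + \<beta>) * ?f (?R x) (r x))"
    by simp
  then show ?thesis
    unfolding GJS_def klr_def by (simp only: sum.distrib sum_distrib_left)
qed

lemma GJS_le_kl:
  fixes p q :: "'a::finite \<Rightarrow> real"
  assumes p: "p \<in> probvec" and q: "q \<in> probvec" and \<alpha>: "\<alpha> > 0" and \<beta>: "\<beta> > 0"
  shows "ereal (GJS p q \<alpha> \<beta>) \<le> ereal \<alpha> * kl p (pmf P) + ereal \<beta> * kl q (pmf P)"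
proof (cases "\<forall>x. pmf P x = 0 \<longrightarrow> p x = 0 \<and> q x = 0")
  case True
  have "0 \<le> klr (mixR \<alpha> \<beta> p q) (pmf P)"
    using True mixR_probvec[OF p q \<alpha> \<beta>] by (intro klr_nonneg) (auto simp: mixR_def sum_pmf_eq_1)
  then have "GJS p q \<alpha> \<beta> \<le> \<alpha> * klr p (pmf P) + \<beta> * klr q (pmf P)"
    using klr_compensation[OF p q pmf_probvec \<alpha> \<beta>] True \<alpha> \<beta> by auto
  then show ?thesis using True by (simp add: kl_def)
next
  case False
  then have "kl p (pmf P) = \<infinity> \<or> kl q (pmf P) = \<infinity>" by (auto simp: kl_def)
  then have infinite: "ereal \<alpha> * kl p (pmf P) + ereal \<beta> * kl q (pmf P) = \<infinity>"
    using scaled_kl_nonneg[OF \<alpha> p, of P] scaled_kl_nonneg[OF \<beta> q, of P] \<alpha> \<beta> by auto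
  show ?thesis unfolding infinite by simp
qed

lemma isCont_xlogx: "isCont (\<lambda>x::real. x * ln x) x0"
proof (cases "x0 = 0")
  case True
  have "((\<lambda>x::real. x * ln x) \<longlongrightarrow> 0) (at_right 0)"
    by real_asymp
  moreover have "((\<lambda>x::real. - x * ln x) \<longlongrightarrow> 0) (at_right 0)"
    by real_asymp
  then have "((\<lambda>x::real. x * ln x) \<longlongrightarrow> 0) (at_left 0)"
    by (simp add: filterlim_at_left_to_right ln_minus)
  ultimately show ?thesis
    using True by (simp add: isCont_def filterlim_split_at)
qed (auto intro!: continuous_intros)

text \<open>Written with \<open>x ln x\<close> instead of divergences, the generalized Jensen-Shannon divergence is
  visibly continuous.\<close>
lemma GJS_eq_xlogx_sum:
  fixes p q :: "'a::finite \<Rightarrow> real"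
  assumes \<alpha>: "\<alpha> > 0" and \<beta>: "\<beta> > 0" and p: "\<And>a. p a \<ge> 0" and q: "\<And>a. q a \<ge> 0"
  shows "GJS p q \<alpha> \<beta> = (\<Sum>a\<in>UNIV. \<alpha> * (p a * ln (p a)) + \<beta> * (q a * ln (q a))
    - (\<alpha> + \<beta>) * (mixR \<alpha> \<beta> p q a * ln (mixR \<alpha> \<beta> p q a)))"
proof -
  let ?R = "mixR \<alpha> \<beta> p q"
  have xlogx_term: "(if u = 0 then 0 else u * ln (u / ?R a)) = u * ln u - u * ln (?R a)"
    if "u \<ge> 0" "u \<noteq> 0 \<Longrightarrow> ?R a > 0" for u a
    using that by (cases "u = 0") (simp_all add: ln_div algebra_simps)
  have R_pos: "?R a > 0" if "p a \<noteq> 0 \<or> q a \<noteq> 0" for a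
  proof -
    have "0 < \<alpha> * p a + \<beta> * q a"
    proof (cases "p a = 0")
      case True
      then have "q a > 0" using that q[of a] by (simp add: less_le)
      then show ?thesis using True \<beta> by simp
    next
      case False
      then have "p a > 0" using p[of a] by (simp add: less_le)
      then show ?thesis using \<alpha> \<beta> q[of a] by (intro add_pos_nonneg) simp_all
    qed
    then show ?thesis using \<alpha> \<beta> by (simp add: mixR_def)
  qed
  have mix: "(\<alpha> + \<beta>) * (?R a * ln (?R a)) = (\<alpha> * p a + \<beta> * q a) * ln (?R a)" for a
    using \<alpha> \<beta> by (simp add: mixR_def)
  have "\<alpha> * (if p a = 0 then 0 else p a * ln (p a / ?R a)) + \<beta> * (if q a = 0 then 0 else q a * ln (q a / ?R a))
      = \<alpha> * (p a * ln (p a)) + \<beta> * (q a * ln (q a)) - (\<alpha> + \<beta>) * (?R a * ln (?R a))" for a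
  proof -
    have tp: "(if p a = 0 then 0 else p a * ln (p a / ?R a)) = p a * ln (p a) - p a * ln (?R a)"
      by (rule xlogx_term) (use p R_pos in auto)
    have tq: "(if q a = 0 then 0 else q a * ln (q a / ?R a)) = q a * ln (q a) - q a * ln (?R a)"
      by (rule xlogx_term) (use q R_pos in auto)
    show ?thesis
      unfolding tp tq mix by (simp add: algebra_simps)
  qed
  then show ?thesis
    unfolding GJS_def klr_def sum_distrib_left sum.distrib[symmetric] by simp
qed

lemma tendsto_Gm:
  fixes Pv Qv :: "nat \<Rightarrow> 'a::finite \<Rightarrow> real" and Os Ps :: "nat \<Rightarrow> nat \<Rightarrow> 'a \<Rightarrow> real"
  assumes \<alpha>: "\<alpha> > 0" and \<beta>: "\<beta> > 0" and m: "m \<subseteq> {..<M1} \<times> {..<M2}"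
    and nonneg: "\<And>k i a. i < M1 \<Longrightarrow> 0 \<le> Os k i a" "\<And>k j a. j < M2 \<Longrightarrow> 0 \<le> Ps k j a"
      "\<And>i a. i < M1 \<Longrightarrow> 0 \<le> Pv i a" "\<And>j a. j < M2 \<Longrightarrow> 0 \<le> Qv j a"
    and lim: "\<And>i a. i < M1 \<Longrightarrow> (\<lambda>k. Os k i a) \<longlonglongrightarrow> Pv i a" "\<And>j a. j < M2 \<Longrightarrow> (\<lambda>k. Ps k j a) \<longlonglongrightarrow> Qv j a"
  shows "(\<lambda>k. Gm m \<alpha> \<beta> (Os k) (Ps k)) \<longlonglongrightarrow> Gm m \<alpha> \<beta> Pv Qv"
proof -
  have xlogx: "(\<lambda>k. f k * ln (f k)) \<longlonglongrightarrow> l * ln l" if "f \<longlonglongrightarrow> l" for f :: "nat \<Rightarrow> real" and l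
    using isCont_tendsto_compose[OF isCont_xlogx that] .
  have "(\<lambda>k. GJS (Os k i) (Ps k j) \<alpha> \<beta>) \<longlonglongrightarrow> GJS (Pv i) (Qv j) \<alpha> \<beta>" if ij: "i < M1" "j < M2" for i j
  proof -
    have "(\<lambda>k. mixR \<alpha> \<beta> (Os k i) (Ps k j) a) \<longlonglongrightarrow> mixR \<alpha> \<beta> (Pv i) (Qv j) a" for a
      unfolding mixR_def using \<alpha> \<beta> ij by (intro tendsto_intros lim) auto
    then have "(\<lambda>k. \<Sum>a\<in>UNIV. \<alpha> * (Os k i a * ln (Os k i a)) + \<beta> * (Ps k j a * ln (Ps k j a))
        - (\<alpha> + \<beta>) * (mixR \<alpha> \<beta> (Os k i) (Ps k j) a * ln (mixR \<alpha> \<beta> (Os k i) (Ps k j) a)))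
      \<longlonglongrightarrow> (\<Sum>a\<in>UNIV. \<alpha> * (Pv i a * ln (Pv i a)) + \<beta> * (Qv j a * ln (Qv j a))
        - (\<alpha> + \<beta>) * (mixR \<alpha> \<beta> (Pv i) (Qv j) a * ln (mixR \<alpha> \<beta> (Pv i) (Qv j) a)))"
      using ij by (intro tendsto_sum tendsto_diff tendsto_add tendsto_mult_left xlogx lim)
    then show ?thesis
      using ij nonneg by (simp add: GJS_eq_xlogx_sum[OF \<alpha> \<beta>])
  qed
  then show ?thesis
    unfolding Gm_def using m by (intro tendsto_sum) auto
qed

lemma Gm_gt_nearby:
  fixes Pv Qv :: "nat \<Rightarrow> 'a::finite \<Rightarrow> real"
  assumes \<alpha>: "\<alpha> > 0" and \<beta>: "\<beta> > 0" and m: "m \<subseteq> {..<M1} \<times> {..<M2}"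
    and nonneg: "\<forall>i<M1. \<forall>a. 0 \<le> Pv i a" "\<forall>j<M2. \<forall>a. 0 \<le> Qv j a"
    and v: "v < Gm m \<alpha> \<beta> Pv Qv"
  shows "\<exists>\<delta>>0. \<forall>\<Omega> \<Psi>. (\<forall>i<M1. \<forall>a. 0 \<le> \<Omega> i a) \<longrightarrow> (\<forall>j<M2. \<forall>a. 0 \<le> \<Psi> j a) \<longrightarrow>
      (\<forall>i<M1. \<forall>a. \<bar>\<Omega> i a - Pv i a\<bar> < \<delta>) \<longrightarrow> (\<forall>j<M2. \<forall>a. \<bar>\<Psi> j a - Qv j a\<bar> < \<delta>) \<longrightarrow>
      v < Gm m \<alpha> \<beta> \<Omega> \<Psi>"
proof (rule ccontr)
  define bad where "bad \<delta> \<Omega> \<Psi> \<longleftrightarrow> (\<forall>i<M1. \<forall>a. 0 \<le> \<Omega> i a) \<and> (\<forall>j<M2. \<forall>a. 0 \<le> \<Psi> j a) \<and>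
      (\<forall>i<M1. \<forall>a. \<bar>\<Omega> i a - Pv i a\<bar> < \<delta>) \<and> (\<forall>j<M2. \<forall>a. \<bar>\<Psi> j a - Qv j a\<bar> < \<delta>) \<and>
      Gm m \<alpha> \<beta> \<Omega> \<Psi> \<le> v" for \<delta> \<Omega> \<Psi>
  assume "\<not> ?thesis"
  then have "\<exists>\<Omega> \<Psi>. bad \<delta> \<Omega> \<Psi>" if "\<delta> > 0" for \<delta>
    using that unfolding bad_def not_less[symmetric] by blast
  then have "\<forall>k. \<exists>\<Omega> \<Psi>. bad (1 / real (Suc k)) \<Omega> \<Psi>"
    by simp
  then obtain Os Ps where bad: "\<And>k. bad (1 / real (Suc k)) (Os k) (Ps k)"
    by metis
  have "(\<lambda>k. Os k i a) \<longlonglongrightarrow> Pv i a" if "i < M1" for i a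
    by (rule LIM_zero_cancel, rule LIMSEQ_norm_0) (use bad that in \<open>auto simp: bad_def\<close>)
  moreover have "(\<lambda>k. Ps k j a) \<longlonglongrightarrow> Qv j a" if "j < M2" for j a
    by (rule LIM_zero_cancel, rule LIMSEQ_norm_0) (use bad that in \<open>auto simp: bad_def\<close>)
  ultimately have "(\<lambda>k. Gm m \<alpha> \<beta> (Os k) (Ps k)) \<longlonglongrightarrow> Gm m \<alpha> \<beta> Pv Qv"
    using bad nonneg by (intro tendsto_Gm[OF \<alpha> \<beta> m]) (auto simp: bad_def)
  then have "Gm m \<alpha> \<beta> Pv Qv \<le> v"
    by (rule LIMSEQ_le_const2) (use bad in \<open>auto simp: bad_def\<close>)
  then show False using v by simp
qed

lemma hellinger_term_le:
  fixes w p :: real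
  assumes w: "w \<ge> 0" and p: "p \<ge> 0" and ac: "p = 0 \<Longrightarrow> w = 0"
  shows "2 * w - 2 * (sqrt w * sqrt p) \<le> (if w = 0 then 0 else w * ln (w / p))"
proof (cases "w = 0")
  case False
  then have w0: "w > 0" and p0: "p > 0" using w p ac by (auto simp: less_le)
  define r where "r = sqrt p / sqrt w"
  have r0: "r > 0" using w0 p0 by (simp add: r_def)
  have "ln (w / p) = - 2 * ln r"
    using w0 p0 by (simp add: r_def ln_div ln_sqrt)
  moreover have "w * r = (w / sqrt w) * sqrt p"
    by (simp add: r_def)
  then have "w * r = sqrt w * sqrt p"
    using w0 by (simp add: real_div_sqrt)
  ultimately have "w * ln (w / p) - (2 * w - 2 * (sqrt w * sqrt p)) = 2 * w * (r - 1 - ln r)"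
    by (simp add: algebra_simps)
  moreover have "0 \<le> 2 * w * (r - 1 - ln r)"
    using ln_le_minus_one[OF r0] w0 by simp
  ultimately show ?thesis using False by simp
qed simp

lemma sum_sqrt_diff_square_le_klr:
  fixes \<Omega> p :: "'a::finite \<Rightarrow> real"
  assumes \<Omega>: "\<Omega> \<in> probvec" and p: "p \<in> probvec" and ac: "\<And>a. p a = 0 \<Longrightarrow> \<Omega> a = 0"
  shows "(\<Sum>a\<in>UNIV. (sqrt (\<Omega> a) - sqrt (p a))\<^sup>2) \<le> klr \<Omega> p"
proof -
  have nonneg: "\<Omega> a \<ge> 0" "p a \<ge> 0" for a using \<Omega> p by (auto simp: probvec_def)
  have "(\<Sum>a\<in>UNIV. (sqrt (\<Omega> a) - sqrt (p a))\<^sup>2) = (\<Sum>a\<in>UNIV. \<Omega> a + p a - 2 * (sqrt (\<Omega> a) * sqrt (p a)))"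
    using nonneg by (intro sum.cong) (simp_all add: power2_diff)
  also have "\<dots> = (\<Sum>a\<in>UNIV. 2 * \<Omega> a - 2 * (sqrt (\<Omega> a) * sqrt (p a)))"
    using \<Omega> p by (simp add: probvec_def sum.distrib sum_subtractf sum_distrib_left[symmetric])
  also have "\<dots> \<le> klr \<Omega> p"
    unfolding klr_def using nonneg ac by (intro sum_mono hellinger_term_le)
  finally show ?thesis .
qed

lemma abs_diff_le_of_kl_less:
  fixes \<Omega> :: "'a::finite \<Rightarrow> real"
  assumes \<Omega>: "\<Omega> \<in> probvec" and kl: "kl \<Omega> (pmf P) < ereal \<eta>"
  shows "\<bar>\<Omega> a - pmf P a\<bar> \<le> 2 * sqrt \<eta>"
proof -
  have ac: "\<And>a. pmf P a = 0 \<Longrightarrow> \<Omega> a = 0" and "klr \<Omega> (pmf P) < \<eta>"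
    using kl unfolding kl_def by (auto split: if_splits)
  moreover have "(sqrt (\<Omega> a) - sqrt (pmf P a))\<^sup>2 \<le> (\<Sum>a\<in>UNIV. (sqrt (\<Omega> a) - sqrt (pmf P a))\<^sup>2)"
    by (rule member_le_sum) auto
  ultimately have "(sqrt (\<Omega> a) - sqrt (pmf P a))\<^sup>2 \<le> \<eta>"
    using sum_sqrt_diff_square_le_klr[OF \<Omega> pmf_probvec[of P] ac] by linarith
  then have d: "\<bar>sqrt (\<Omega> a) - sqrt (pmf P a)\<bar> \<le> sqrt \<eta>"
    using real_sqrt_le_mono by fastforce
  have \<Omega>0: "\<Omega> a \<ge> 0" using \<Omega> by (simp add: probvec_def)
  have "sqrt (\<Omega> a) \<le> 1" "sqrt (pmf P a) \<le> 1"
    using probvec_le_1[OF \<Omega>] probvec_le_1[OF pmf_probvec] by simp_all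
  then have s: "sqrt (\<Omega> a) + sqrt (pmf P a) \<le> 2" by linarith
  have "\<Omega> a - pmf P a = (sqrt (\<Omega> a) - sqrt (pmf P a)) * (sqrt (\<Omega> a) + sqrt (pmf P a))"
    using \<Omega>0 by (simp add: algebra_simps)
  moreover have "0 \<le> sqrt (\<Omega> a) + sqrt (pmf P a)"
    using \<Omega>0 by simp
  ultimately have "\<bar>\<Omega> a - pmf P a\<bar> = \<bar>sqrt (\<Omega> a) - sqrt (pmf P a)\<bar> * (sqrt (\<Omega> a) + sqrt (pmf P a))"
    by (simp only: abs_mult abs_of_nonneg)
  also have "\<dots> \<le> sqrt \<eta> * 2"
  proof (rule mult_mono[OF d s])
    show "0 \<le> sqrt \<eta>" using d abs_ge_zero[of "sqrt (\<Omega> a) - sqrt (pmf P a)"] by linarith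
    show "0 \<le> sqrt (\<Omega> a) + sqrt (pmf P a)" using \<Omega>0 by simp
  qed
  finally show ?thesis by simp
qed

lemma scaled_kl_ge_if_abs_diff_gt:
  assumes \<Omega>: "\<Omega> \<in> probvec" and \<alpha>: "\<alpha> > 0" and far: "2 * sqrt \<eta> < \<bar>\<Omega> a - pmf P a\<bar>"
  shows "ereal (\<alpha> * \<eta>) \<le> ereal \<alpha> * kl \<Omega> (pmf P)"
proof -
  have "\<not> kl \<Omega> (pmf P) < ereal \<eta>"
    using abs_diff_le_of_kl_less[OF \<Omega>, of P \<eta> a] far by linarith
  then have "ereal \<alpha> * ereal \<eta> \<le> ereal \<alpha> * kl \<Omega> (pmf P)"
    using \<alpha> by (intro ereal_mult_left_mono) (auto simp: not_less)
  then show ?thesis by simp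
qed

lemma scaled_kl_le_Eexp:
  assumes "\<forall>i<M1. \<Omega> i \<in> probvec" "\<forall>j<M2. \<Psi> j \<in> probvec" "\<alpha> > 0" "\<beta> > 0"
  shows "i < M1 \<Longrightarrow> ereal \<alpha> * kl (\<Omega> i) (pmf (P i)) \<le> Eexp M1 M2 \<alpha> \<beta> P Q \<Omega> \<Psi>"
    and "j < M2 \<Longrightarrow> ereal \<beta> * kl (\<Psi> j) (pmf (Q j)) \<le> Eexp M1 M2 \<alpha> \<beta> P Q \<Omega> \<Psi>"
proof -
  have X: "0 \<le> ereal \<alpha> * kl (\<Omega> i) (pmf (P i))" if "i < M1" for i
    using assms that by (intro scaled_kl_nonneg) auto
  have Y: "0 \<le> ereal \<beta> * kl (\<Psi> j) (pmf (Q j))" if "j < M2" for j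
    using assms that by (intro scaled_kl_nonneg) auto
  show "ereal \<alpha> * kl (\<Omega> i) (pmf (P i)) \<le> Eexp M1 M2 \<alpha> \<beta> P Q \<Omega> \<Psi>" if "i < M1"
  proof -
    have "(\<Sum>i\<in>{i}. ereal \<alpha> * kl (\<Omega> i) (pmf (P i))) \<le> (\<Sum>i<M1. ereal \<alpha> * kl (\<Omega> i) (pmf (P i)))"
      by (rule sum_mono2) (use that X in auto)
    then show ?thesis
      unfolding Eexp_def by (intro add_increasing2 sum_nonneg) (auto intro: Y)
  qed
  show "ereal \<beta> * kl (\<Psi> j) (pmf (Q j)) \<le> Eexp M1 M2 \<alpha> \<beta> P Q \<Omega> \<Psi>" if "j < M2"
  proof -
    have "(\<Sum>j\<in>{j}. ereal \<beta> * kl (\<Psi> j) (pmf (Q j))) \<le> (\<Sum>j<M2. ereal \<beta> * kl (\<Psi> j) (pmf (Q j)))"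
      by (rule sum_mono2) (use that Y in auto)
    then show ?thesis
      unfolding Eexp_def by (intro add_increasing sum_nonneg) (auto intro: X)
  qed
qed

text \<open>By continuity of GJS, a profile whose statistic is at most \<open>v\<close> is \<open>\<delta>\<close>-far from the truth in
  some coordinate, and there the Hellinger bound makes the divergence at least \<open>(\<delta> / 4)\<^sup>2\<close>.\<close>
lemma Eexp_gap:
  fixes P Q :: "nat \<Rightarrow> 'a::finite pmf"
  assumes \<alpha>: "\<alpha> > 0" and \<beta>: "\<beta> > 0" and m: "m \<subseteq> {..<M1} \<times> {..<M2}"
    and v: "v < Gm m \<alpha> \<beta> (\<lambda>i. pmf (P i)) (\<lambda>j. pmf (Q j))"
  shows "\<exists>c>0. Eexp_ge_on M1 M2 \<alpha> \<beta> P Q (ereal c) (\<lambda>\<Omega> \<Psi>. Gm m \<alpha> \<beta> \<Omega> \<Psi> \<le> v)"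
proof -
  obtain \<delta> where \<delta>: "\<delta> > 0" and near: "\<And>\<Omega> \<Psi>. (\<forall>i<M1. \<forall>a. 0 \<le> \<Omega> i a) \<Longrightarrow> (\<forall>j<M2. \<forall>a. 0 \<le> \<Psi> j a) \<Longrightarrow>
      (\<forall>i<M1. \<forall>a. \<bar>\<Omega> i a - pmf (P i) a\<bar> < \<delta>) \<Longrightarrow> (\<forall>j<M2. \<forall>a. \<bar>\<Psi> j a - pmf (Q j) a\<bar> < \<delta>) \<Longrightarrow>
      v < Gm m \<alpha> \<beta> \<Omega> \<Psi>"
    using Gm_gt_nearby[OF \<alpha> \<beta> m _ _ v] by auto
  define \<eta> where "\<eta> = (\<delta> / 4)\<^sup>2"
  have \<eta>: "\<eta> > 0" "2 * sqrt \<eta> < \<delta>" using \<delta> by (simp_all add: \<eta>_def)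
  show ?thesis
  proof (intro exI[of _ "min \<alpha> \<beta> * \<eta>"] conjI Eexp_ge_onI)
    show "min \<alpha> \<beta> * \<eta> > 0" using \<alpha> \<beta> \<eta> by simp
    fix \<Omega> \<Psi> :: "nat \<Rightarrow> 'a \<Rightarrow> real"
    assume \<Omega>: "\<forall>i<M1. \<Omega> i \<in> probvec" and \<Psi>: "\<forall>j<M2. \<Psi> j \<in> probvec" and G: "Gm m \<alpha> \<beta> \<Omega> \<Psi> \<le> v"
    have nonneg: "\<forall>i<M1. \<forall>a. 0 \<le> \<Omega> i a" "\<forall>j<M2. \<forall>a. 0 \<le> \<Psi> j a"
      using \<Omega> \<Psi> by (auto simp: probvec_def)
    have "\<not> ((\<forall>i<M1. \<forall>a. \<bar>\<Omega> i a - pmf (P i) a\<bar> < \<delta>) \<and> (\<forall>j<M2. \<forall>a. \<bar>\<Psi> j a - pmf (Q j) a\<bar> < \<delta>))"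
    proof
      assume "(\<forall>i<M1. \<forall>a. \<bar>\<Omega> i a - pmf (P i) a\<bar> < \<delta>) \<and> (\<forall>j<M2. \<forall>a. \<bar>\<Psi> j a - pmf (Q j) a\<bar> < \<delta>)"
      then have "v < Gm m \<alpha> \<beta> \<Omega> \<Psi>" using near[OF nonneg] by blast
      with G show False by simp
    qed
    then consider (X) i a where "i < M1" "\<bar>\<Omega> i a - pmf (P i) a\<bar> \<ge> \<delta>"
      | (Y) j a where "j < M2" "\<bar>\<Psi> j a - pmf (Q j) a\<bar> \<ge> \<delta>"
      by (auto simp: not_less)
    then show "ereal (min \<alpha> \<beta> * \<eta>) \<le> Eexp M1 M2 \<alpha> \<beta> P Q \<Omega> \<Psi>"
    proof cases
      case X
      have "ereal (min \<alpha> \<beta> * \<eta>) \<le> ereal (\<alpha> * \<eta>)" using \<eta> by (simp add: mult_right_mono)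
      also have "\<dots> \<le> ereal \<alpha> * kl (\<Omega> i) (pmf (P i))"
        using \<Omega> X \<alpha> \<eta>(2) by (intro scaled_kl_ge_if_abs_diff_gt[where a = a]) auto
      also have "\<dots> \<le> Eexp M1 M2 \<alpha> \<beta> P Q \<Omega> \<Psi>" by (rule scaled_kl_le_Eexp(1)[OF \<Omega> \<Psi> \<alpha> \<beta> X(1)])
      finally show ?thesis .
    next
      case Y
      have "ereal (min \<alpha> \<beta> * \<eta>) \<le> ereal (\<beta> * \<eta>)" using \<eta> by (simp add: mult_right_mono)
      also have "\<dots> \<le> ereal \<beta> * kl (\<Psi> j) (pmf (Q j))"
        using \<Psi> Y \<beta> \<eta>(2) by (intro scaled_kl_ge_if_abs_diff_gt[where a = a]) auto
      also have "\<dots> \<le> Eexp M1 M2 \<alpha> \<beta> P Q \<Omega> \<Psi>" by (rule scaled_kl_le_Eexp(2)[OF \<Omega> \<Psi> \<alpha> \<beta> Y(1)])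
      finally show ?thesis .
    qed
  qed
qed



lemma is_match_iff: "is_match M1 M2 m \<longleftrightarrow> m \<subseteq> {..<M1} \<times> {..<M2} \<and>
    (\<forall>i j i' j'. (i, j) \<in> m \<longrightarrow> (i', j') \<in> m \<longrightarrow> (i = i' \<longleftrightarrow> j = j'))"
  unfolding is_match_def Ball_def split_paired_All by simp

lemma is_matchD:
  assumes "is_match M1 M2 m"
  shows "m \<subseteq> {..<M1} \<times> {..<M2}" and "finite m"
    and "(i, j) \<in> m \<Longrightarrow> (i', j') \<in> m \<Longrightarrow> i = i' \<longleftrightarrow> j = j'"
  using assms finite_subset[of m "{..<M1} \<times> {..<M2}"] unfolding is_match_iff by auto

lemma is_match_subset:
  assumes "is_match M1 M2 m" and "m' \<subseteq> m"
  shows "is_match M1 M2 m'"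
  unfolding is_match_iff
proof (intro conjI allI impI)
  show "m' \<subseteq> {..<M1} \<times> {..<M2}" using assms is_matchD(1) by blast
  fix i j i' j' assume "(i, j) \<in> m'" "(i', j') \<in> m'"
  then show "i = i' \<longleftrightarrow> j = j'" using is_matchD(3)[OF assms(1)] assms(2) by blast
qed

lemma is_match_inj_on:
  assumes "is_match M1 M2 m"
  shows "inj_on fst m" and "inj_on snd m"
  by (auto intro!: inj_onI simp: is_matchD(3)[OF assms])

lemma Midx_iff: "m \<in> Midx M1 M2 \<longleftrightarrow> is_match M1 M2 m \<and> 1 \<le> card m \<and> card m \<le> M2"
  unfolding Midx_def by simp

lemma matches_iff: "m \<in> matches M1 M2 K \<longleftrightarrow> is_match M1 M2 m \<and> card m = K"
  unfolding matches_def by simp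

lemma finite_Midx: "finite (Midx M1 M2)"
  by (rule finite_subset[of _ "Pow ({..<M1} \<times> {..<M2})"]) (auto simp: Midx_def is_match_def)

lemma finite_matches: "finite (matches M1 M2 K)"
  by (rule finite_subset[of _ "Pow ({..<M1} \<times> {..<M2})"]) (auto simp: matches_def is_match_def)

lemma obtain_subset_card_neq:
  assumes "finite B" and "1 \<le> h" and "h < card B"
  obtains A where "A \<subseteq> B" and "card A = h" and "A \<noteq> C"
proof -
  obtain A where A: "A \<subseteq> B" "card A = h"
    using obtain_subset_with_card_n[of h B] assms(3) by auto
  show ?thesis
  proof (cases "A = C")
    case True
    have "A \<noteq> B" using A assms(3) by auto
    then obtain x where x: "x \<in> B" "x \<notin> A" using A(1) by blast
    have "A \<noteq> {}" using A assms(2) by auto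
    then obtain y where y: "y \<in> A" by blast
    have "finite A" using A(1) assms(1) finite_subset by blast
    then show ?thesis
      using A x y True assms(2) by (intro that[of "insert x (A - {y})"]) (auto simp: card_Diff_singleton card_gt_0_iff Suc_diff_1)
  qed (use A that in blast)
qed

lemma Gm_cong:
  "m \<subseteq> {..<M1} \<times> {..<M2} \<Longrightarrow> (\<And>i. i < M1 \<Longrightarrow> X i = X' i) \<Longrightarrow> (\<And>j. j < M2 \<Longrightarrow> Y j = Y' j) \<Longrightarrow>
    Gm m \<alpha> \<beta> X Y = Gm m \<alpha> \<beta> X' Y'"
  unfolding Gm_def by (intro sum.cong) auto

lemma Gm_mono:
  assumes "m' \<subseteq> m" "finite m" "m \<subseteq> {..<M1} \<times> {..<M2}"
    and "\<forall>i<M1. \<Omega> i \<in> probvec" "\<forall>j<M2. \<Psi> j \<in> probvec" "\<alpha> > 0" "\<beta> > 0"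
  shows "Gm m' \<alpha> \<beta> \<Omega> \<Psi> \<le> Gm m \<alpha> \<beta> \<Omega> (\<Psi> :: nat \<Rightarrow> 'a::finite \<Rightarrow> real)"
  unfolding Gm_def using assms by (intro sum_mono2) (auto intro!: GJS_nonneg)

lemma Gm_true_eq_sum_diff:
  fixes P Q :: "nat \<Rightarrow> 'a::finite pmf"
  assumes true: "\<forall>(i, j)\<in>m. P i = Q j" and "finite m'" and "\<alpha> > 0" "\<beta> > 0"
  shows "Gm m' \<alpha> \<beta> (\<lambda>i. pmf (P i)) (\<lambda>j. pmf (Q j)) = (\<Sum>(i, j)\<in>m' - m. GJS (pmf (P i)) (pmf (Q j)) \<alpha> \<beta>)"
proof -
  have "GJS (pmf (P i)) (pmf (Q j)) \<alpha> \<beta> = 0" if "(i, j) \<in> m" for i j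
    using bspec[OF true that] GJS_self[OF assms(3,4)] by simp
  then have "(\<Sum>(i, j)\<in>m' \<inter> m. GJS (pmf (P i)) (pmf (Q j)) \<alpha> \<beta>) = 0"
    by (intro sum.neutral) auto
  then show ?thesis
    unfolding Gm_def sum.Int_Diff[OF assms(2), of _ m] by simp
qed

text \<open>Pairs of the true match have \<open>P\<^sub>i = Q\<^sub>j\<close>, and \<open>GJS(\<Omega>, \<Psi>) \<le> \<alpha> D(\<Omega> \<parallel> R) + \<beta> D(\<Psi> \<parallel> R)\<close>
  for every common reference \<open>R\<close>.\<close>
lemma Gm_le_Eexp:
  fixes P Q :: "nat \<Rightarrow> 'a::finite pmf"
  assumes m: "is_match M1 M2 m" and true: "\<forall>(i, j)\<in>m. P i = Q j"
    and \<Omega>: "\<forall>i<M1. \<Omega> i \<in> probvec" and \<Psi>: "\<forall>j<M2. \<Psi> j \<in> probvec" and \<alpha>: "\<alpha> > 0" and \<beta>: "\<beta> > 0"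
  shows "ereal (Gm m \<alpha> \<beta> \<Omega> \<Psi>) \<le> Eexp M1 M2 \<alpha> \<beta> P Q \<Omega> \<Psi>"
proof -
  note sub = is_matchD(1)[OF m]
  define fX where "fX i = ereal \<alpha> * kl (\<Omega> i) (pmf (P i))" for i
  define fY where "fY j = ereal \<beta> * kl (\<Psi> j) (pmf (Q j))" for j
  have "ereal (Gm m \<alpha> \<beta> \<Omega> \<Psi>) = (\<Sum>z\<in>m. ereal (GJS (\<Omega> (fst z)) (\<Psi> (snd z)) \<alpha> \<beta>))"
    unfolding Gm_def by (simp add: case_prod_beta)
  also have "\<dots> \<le> (\<Sum>z\<in>m. fX (fst z) + fY (snd z))"
  proof (rule sum_mono)
    fix z assume z: "z \<in> m"
    then have eq: "Q (snd z) = P (fst z)" using true by (auto simp: case_prod_beta)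
    show "ereal (GJS (\<Omega> (fst z)) (\<Psi> (snd z)) \<alpha> \<beta>) \<le> fX (fst z) + fY (snd z)"
      unfolding fX_def fY_def eq using \<Omega> \<Psi> z sub by (intro GJS_le_kl \<alpha> \<beta>) auto
  qed
  also have "\<dots> = (\<Sum>z\<in>m. fX (fst z)) + (\<Sum>z\<in>m. fY (snd z))"
    by (rule sum.distrib)
  also have "(\<Sum>z\<in>m. fX (fst z)) = (\<Sum>i\<in>fst ` m. fX i)"
    using sum.reindex[OF is_match_inj_on(1)[OF m], of fX] by (simp add: comp_def)
  also have "(\<Sum>z\<in>m. fY (snd z)) = (\<Sum>j\<in>snd ` m. fY j)"
    using sum.reindex[OF is_match_inj_on(2)[OF m], of fY] by (simp add: comp_def)
  also have "(\<Sum>i\<in>fst ` m. fX i) \<le> (\<Sum>i<M1. fX i)"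
    using sub \<Omega> \<alpha> by (intro sum_mono2) (auto simp: fX_def intro!: scaled_kl_nonneg)
  also have "(\<Sum>j\<in>snd ` m. fY j) \<le> (\<Sum>j<M2. fY j)"
    using sub \<Psi> \<beta> by (intro sum_mono2) (auto simp: fY_def intro!: scaled_kl_nonneg)
  finally show ?thesis unfolding Eexp_def fX_def fY_def by (simp add: add_mono)
qed

lemma Lam_le:
  "m' \<in> matches M1 M2 (card m) \<Longrightarrow> m' \<noteq> m \<Longrightarrow>
    Lam M1 M2 \<alpha> \<beta> m P Q \<le> ereal (\<Sum>(i, j)\<in>m' - m. GJS (pmf (P i)) (pmf (Q j)) \<alpha> \<beta>)"
  unfolding Lam_def by (rule Inf_lower) blast

lemma G0_le: "i < M1 \<Longrightarrow> j < M2 \<Longrightarrow> G0 M1 M2 \<alpha> \<beta> P Q \<le> GJS (pmf (P i)) (pmf (Q j)) \<alpha> \<beta>"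
proof -
  assume "i < M1" "j < M2"
  have "{GJS (pmf (P i)) (pmf (Q j)) \<alpha> \<beta> | i j. i < M1 \<and> j < M2}
      = (\<lambda>(i, j). GJS (pmf (P i)) (pmf (Q j)) \<alpha> \<beta>) ` ({..<M1} \<times> {..<M2})"
    by auto
  then show ?thesis
    unfolding G0_def using \<open>i < M1\<close> \<open>j < M2\<close> by (intro Min_le) auto
qed

lemma inPm_true: "inPm M1 M2 m P Q \<Longrightarrow> is_match M1 M2 m \<Longrightarrow> \<forall>(i, j)\<in>m. P i = Q j"
  unfolding inPm_def using is_matchD(1) by fastforce

lemma Gm_true_gt_if_Lam_gt:
  fixes P Q :: "nat \<Rightarrow> 'a::finite pmf"
  assumes \<alpha>: "\<alpha> > 0" and \<beta>: "\<beta> > 0" and true: "\<forall>(i, j)\<in>m. P i = Q j"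
    and Lam: "ereal l3 < Lam M1 M2 \<alpha> \<beta> m P Q"
    and m': "m' \<in> matches M1 M2 (card m)" "m' \<noteq> m"
  shows "l3 < Gm m' \<alpha> \<beta> (\<lambda>i. pmf (P i)) (\<lambda>j. pmf (Q j))"
proof -
  have "ereal l3 < ereal (\<Sum>(i, j)\<in>m' - m. GJS (pmf (P i)) (pmf (Q j)) \<alpha> \<beta>)"
    using Lam Lam_le[OF m'] by (rule less_le_trans)
  moreover have "finite m'" using m' by (auto simp: matches_iff dest: is_matchD(2))
  ultimately show ?thesis
    using Gm_true_eq_sum_diff[OF true _ \<alpha> \<beta>] by simp
qed

lemma Gm_true_gt_if_Lam_gt_larger:
  fixes P Q :: "nat \<Rightarrow> 'a::finite pmf"
  assumes \<alpha>: "\<alpha> > 0" and \<beta>: "\<beta> > 0" and true: "\<forall>(i, j)\<in>m. P i = Q j"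
    and m: "m \<in> Midx M1 M2" and Lam: "ereal l3 < Lam M1 M2 \<alpha> \<beta> m P Q"
    and m'': "m'' \<in> Midx M1 M2" "card m < card m''"
  shows "l3 < Gm m'' \<alpha> \<beta> (\<lambda>i. pmf (P i)) (\<lambda>j. pmf (Q j))"
proof -
  have mm: "is_match M1 M2 m''" using m'' by (simp add: Midx_iff)
  obtain A where A: "A \<subseteq> m''" "card A = card m" "A \<noteq> m"
    using obtain_subset_card_neq[OF is_matchD(2)[OF mm] _ m''(2)] m by (auto simp: Midx_iff)
  have "A \<in> matches M1 M2 (card m)" using A is_match_subset[OF mm A(1)] by (simp add: matches_iff)
  then have "l3 < Gm A \<alpha> \<beta> (\<lambda>i. pmf (P i)) (\<lambda>j. pmf (Q j))"
    by (rule Gm_true_gt_if_Lam_gt[OF \<alpha> \<beta> true Lam _ A(3)])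
  also have "\<dots> \<le> Gm m'' \<alpha> \<beta> (\<lambda>i. pmf (P i)) (\<lambda>j. pmf (Q j))"
    using pmf_probvec by (intro Gm_mono[OF A(1) is_matchD(2,1)[OF mm] _ _ \<alpha> \<beta>]) auto
  finally show ?thesis .
qed

section \<open>Lower bounds on the divergence of the error regions\<close>

lemma Eexp_ge_on_disj:
  "Eexp_ge_on M1 M2 \<alpha> \<beta> P Q L \<Phi> \<Longrightarrow> Eexp_ge_on M1 M2 \<alpha> \<beta> P Q L' \<Phi>' \<Longrightarrow>
    Eexp_ge_on M1 M2 \<alpha> \<beta> P Q (min L L') (\<lambda>\<Omega> \<Psi>. \<Phi> \<Omega> \<Psi> \<or> \<Phi>' \<Omega> \<Psi>)"
  unfolding Eexp_ge_on_def by (auto intro: min.coboundedI1 min.coboundedI2)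

lemma Eexp_ge_on_Er:
  "Eexp_ge_on M1 M2 \<alpha> \<beta> P Q (Er M1 M2 \<alpha> \<beta> l P Q) (\<lambda>\<Omega> \<Psi>. \<exists>m\<in>Midx M1 M2. Gm m \<alpha> \<beta> \<Omega> \<Psi> \<le> l)"
  unfolding Eexp_ge_on_def Er_def feasible_def by (blast intro: Inf_lower)

lemma Eexp_ge_on_Gexp:
  "Eexp_ge_on M1 M2 \<alpha> \<beta> P Q (Gexp M1 M2 \<alpha> \<beta> K l P Q)
    (\<lambda>\<Omega> \<Psi>. \<exists>m\<in>Midx M1 M2. K < card m \<and> Gm m \<alpha> \<beta> \<Omega> \<Psi> \<le> l)"
  unfolding Eexp_ge_on_def Gexp_def feasible_def by (blast intro: Inf_lower)

lemma Eexp_ge_on_Gm_true: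
  fixes P Q :: "nat \<Rightarrow> 'a::finite pmf"
  assumes "is_match M1 M2 m" "\<forall>(i, j)\<in>m. P i = Q j" "\<alpha> > 0" "\<beta> > 0"
  shows "Eexp_ge_on M1 M2 \<alpha> \<beta> P Q (ereal v) (\<lambda>\<Omega> \<Psi>. v < Gm m \<alpha> \<beta> \<Omega> \<Psi>)"
proof (rule Eexp_ge_onI)
  fix \<Omega> \<Psi> :: "nat \<Rightarrow> 'a \<Rightarrow> real"
  assume \<Omega>: "\<forall>i<M1. \<Omega> i \<in> probvec" and \<Psi>: "\<forall>j<M2. \<Psi> j \<in> probvec" and "v < Gm m \<alpha> \<beta> \<Omega> \<Psi>"
  then have "ereal v \<le> ereal (Gm m \<alpha> \<beta> \<Omega> \<Psi>)" by simp
  also have "\<dots> \<le> Eexp M1 M2 \<alpha> \<beta> P Q \<Omega> \<Psi>" by (rule Gm_le_Eexp[OF assms(1,2) \<Omega> \<Psi> assms(3,4)])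
  finally show "ereal v \<le> Eexp M1 M2 \<alpha> \<beta> P Q \<Omega> \<Psi>" .
qed

lemma uniform_Eexp_gap:
  fixes P Q :: "nat \<Rightarrow> 'a::finite pmf"
  assumes \<alpha>: "\<alpha> > 0" and \<beta>: "\<beta> > 0" and F: "finite F"
    and gaps: "\<forall>m\<in>F. m \<subseteq> {..<M1} \<times> {..<M2} \<and> v < Gm m \<alpha> \<beta> (\<lambda>i. pmf (P i)) (\<lambda>j. pmf (Q j))"
  shows "\<exists>c>0. Eexp_ge_on M1 M2 \<alpha> \<beta> P Q (ereal c) (\<lambda>\<Omega> \<Psi>. \<exists>m\<in>F. Gm m \<alpha> \<beta> \<Omega> \<Psi> \<le> v)"
proof -
  have "\<forall>m\<in>F. \<exists>c>0. Eexp_ge_on M1 M2 \<alpha> \<beta> P Q (ereal c) (\<lambda>\<Omega> \<Psi>. Gm m \<alpha> \<beta> \<Omega> \<Psi> \<le> v)"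
  proof
    fix m assume "m \<in> F"
    with gaps show "\<exists>c>0. Eexp_ge_on M1 M2 \<alpha> \<beta> P Q (ereal c) (\<lambda>\<Omega> \<Psi>. Gm m \<alpha> \<beta> \<Omega> \<Psi> \<le> v)"
      by (intro Eexp_gap[OF \<alpha> \<beta>]) auto
  qed
  from bchoice[OF this] obtain cf
    where cf: "\<forall>m\<in>F. cf m > 0 \<and> Eexp_ge_on M1 M2 \<alpha> \<beta> P Q (ereal (cf m)) (\<lambda>\<Omega> \<Psi>. Gm m \<alpha> \<beta> \<Omega> \<Psi> \<le> v)"
    by blast
  define c where "c = Min (insert 1 (cf ` F))"
  show ?thesis
  proof (intro exI[of _ c] conjI Eexp_ge_onI)
    show "c > 0" unfolding c_def using F cf by (subst Min_gr_iff) auto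
    fix \<Omega> \<Psi> :: "nat \<Rightarrow> 'a \<Rightarrow> real"
    assume \<Omega>: "\<forall>i<M1. \<Omega> i \<in> probvec" and \<Psi>: "\<forall>j<M2. \<Psi> j \<in> probvec"
      and "\<exists>m\<in>F. Gm m \<alpha> \<beta> \<Omega> \<Psi> \<le> v"
    then obtain m where m: "m \<in> F" "Gm m \<alpha> \<beta> \<Omega> \<Psi> \<le> v" by blast
    have "ereal c \<le> ereal (cf m)" unfolding c_def using F m(1) by (simp add: Min_le)
    also have "\<dots> \<le> Eexp M1 M2 \<alpha> \<beta> P Q \<Omega> \<Psi>"
      using cf m by (intro Eexp_ge_onD[where \<Phi> = "\<lambda>\<Omega> \<Psi>. Gm m \<alpha> \<beta> \<Omega> \<Psi> \<le> v", OF _ \<Omega> \<Psi>]) auto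
    finally show "ereal c \<le> Eexp M1 M2 \<alpha> \<beta> P Q \<Omega> \<Psi>" .
  qed
qed

text \<open>The profiles at which the test keeps sampling under the true hypothesis \<open>m\<close> are bounded away
  from the truth: other matches of the size of \<open>m\<close> have statistic above \<open>l3\<close> at the truth by the
  hypothesis on \<open>\<Lambda>\<close>, and larger matches contain such a match.\<close>
lemma Eexp_gap_match_continue:
  fixes P Q :: "nat \<Rightarrow> 'a::finite pmf"
  assumes \<alpha>: "\<alpha> > 0" and \<beta>: "\<beta> > 0" and l2: "l2 > 0" and l23: "l2 \<le> l3"
    and m: "m \<in> Midx M1 M2" and inP: "inPm M1 M2 m P Q" and Lam: "ereal l3 < Lam M1 M2 \<alpha> \<beta> m P Q"
  shows "\<exists>c>0. Eexp_ge_on M1 M2 \<alpha> \<beta> P Q (ereal c) (\<lambda>\<Omega> \<Psi>. l2 < Gm m \<alpha> \<beta> \<Omega> \<Psi> \<or>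
    (\<exists>m'\<in>matches M1 M2 (card m). m' \<noteq> m \<and> Gm m' \<alpha> \<beta> \<Omega> \<Psi> \<le> l3) \<or>
    (\<exists>m'\<in>Midx M1 M2. card m < card m' \<and> Gm m' \<alpha> \<beta> \<Omega> \<Psi> \<le> l2))"
proof -
  have mm: "is_match M1 M2 m" using m by (simp add: Midx_iff)
  have true: "\<forall>(i, j)\<in>m. P i = Q j" by (rule inPm_true[OF inP mm])
  define F1 where "F1 = {m' \<in> matches M1 M2 (card m). m' \<noteq> m}"
  define F2 where "F2 = {m' \<in> Midx M1 M2. card m < card m'}"
  have fin: "finite F1" "finite F2"
    using finite_matches finite_Midx by (auto simp: F1_def F2_def)
  have gaps1: "\<forall>m'\<in>F1. m' \<subseteq> {..<M1} \<times> {..<M2} \<and> l3 < Gm m' \<alpha> \<beta> (\<lambda>i. pmf (P i)) (\<lambda>j. pmf (Q j))"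
    using Gm_true_gt_if_Lam_gt[OF \<alpha> \<beta> true Lam] by (auto simp: F1_def matches_iff dest: is_matchD(1))
  obtain c1 where c1: "c1 > 0"
    and gap1: "Eexp_ge_on M1 M2 \<alpha> \<beta> P Q (ereal c1) (\<lambda>\<Omega> \<Psi>. \<exists>m'\<in>F1. Gm m' \<alpha> \<beta> \<Omega> \<Psi> \<le> l3)"
    using uniform_Eexp_gap[OF \<alpha> \<beta> fin(1) gaps1] by blast
  have "l2 < Gm m' \<alpha> \<beta> (\<lambda>i. pmf (P i)) (\<lambda>j. pmf (Q j))" if "m' \<in> F2" for m'
    using Gm_true_gt_if_Lam_gt_larger[OF \<alpha> \<beta> true m Lam, of m'] that l23 by (simp add: F2_def)
  then have gaps2: "\<forall>m'\<in>F2. m' \<subseteq> {..<M1} \<times> {..<M2} \<and> l2 < Gm m' \<alpha> \<beta> (\<lambda>i. pmf (P i)) (\<lambda>j. pmf (Q j))"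
    by (auto simp: F2_def Midx_iff dest: is_matchD(1))
  obtain c2 where c2: "c2 > 0"
    and gap2: "Eexp_ge_on M1 M2 \<alpha> \<beta> P Q (ereal c2) (\<lambda>\<Omega> \<Psi>. \<exists>m'\<in>F2. Gm m' \<alpha> \<beta> \<Omega> \<Psi> \<le> l2)"
    using uniform_Eexp_gap[OF \<alpha> \<beta> fin(2) gaps2] by blast
  have gap: "Eexp_ge_on M1 M2 \<alpha> \<beta> P Q (min (ereal l2) (min (ereal c1) (ereal c2))) (\<lambda>\<Omega> \<Psi>. l2 < Gm m \<alpha> \<beta> \<Omega> \<Psi> \<or>
      (\<exists>m'\<in>F1. Gm m' \<alpha> \<beta> \<Omega> \<Psi> \<le> l3) \<or> (\<exists>m'\<in>F2. Gm m' \<alpha> \<beta> \<Omega> \<Psi> \<le> l2))"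
    by (intro Eexp_ge_on_disj Eexp_ge_on_Gm_true[OF mm true \<alpha> \<beta>] gap1 gap2)
  show ?thesis
    by (rule exI[of _ "min l2 (min c1 c2)"]) (use gap l2 c1 c2 in \<open>simp add: F1_def F2_def Bex_def\<close>)
qed

lemma Sstat_eq_Gm_types:
  "is_match M1 M2 m \<Longrightarrow>
    Sstat \<alpha> \<beta> m n \<omega> = Gm m \<alpha> \<beta> (typesX M1 (ssize \<alpha> n) \<omega>) (typesY M2 (ssize \<beta> n) \<omega>)"
  unfolding Sstat_def typesX_def typesY_def by (rule Gm_cong[OF is_matchD(1)]) auto

lemma Sstat_mono:
  assumes m: "is_match M1 M2 m" and "m' \<subseteq> m" and \<alpha>: "\<alpha> > 0" and \<beta>: "\<beta> > 0" and n: "n \<ge> 1"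
  shows "Sstat \<alpha> \<beta> m' n \<omega> \<le> Sstat \<alpha> \<beta> m n \<omega>"
  unfolding Sstat_eq_Gm_types[OF m] Sstat_eq_Gm_types[OF is_match_subset[OF assms(1,2)]]
  using typesX_probvec[OF ssize_pos[OF \<alpha> n]] typesY_probvec[OF ssize_pos[OF \<beta> n]]
  by (intro Gm_mono[OF assms(2) is_matchD(2,1)[OF m] _ _ \<alpha> \<beta>]) auto

text \<open>A larger match contains a match of the size of \<open>m'\<close> other than \<open>m'\<close>.\<close>
lemma Sstat_gt_if_evB_smaller:
  fixes \<omega> :: "'a::finite sample"
  assumes \<alpha>: "\<alpha> > 0" and \<beta>: "\<beta> > 0" and n: "n \<ge> 1" and m: "m \<in> Midx M1 M2"
    and m': "m' \<in> Midx M1 M2" "card m' < card m" and B: "evB M1 M2 \<alpha> \<beta> l2 l3 m' n \<omega>"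
  shows "l3 < Sstat \<alpha> \<beta> m n \<omega>"
proof -
  have mm: "is_match M1 M2 m" using m by (simp add: Midx_iff)
  obtain A where A: "A \<subseteq> m" "card A = card m'" "A \<noteq> m'"
    using obtain_subset_card_neq[OF is_matchD(2)[OF mm] _ m'(2)] m' by (auto simp: Midx_iff)
  have "A \<in> matches M1 M2 (card m')" using A is_match_subset[OF mm A(1)] by (simp add: matches_iff)
  then have "l3 < Sstat \<alpha> \<beta> A n \<omega>" using B A(3) by (auto simp: evB_def)
  also have "\<dots> \<le> Sstat \<alpha> \<beta> m n \<omega>" by (rule Sstat_mono[OF mm A(1) \<alpha> \<beta> n])
  finally show ?thesis .
qed

lemma not_evD_cases:
  fixes \<omega> :: "'a::finite sample"
  assumes \<alpha>: "\<alpha> > 0" and \<beta>: "\<beta> > 0" and n: "n \<ge> 1" and l23: "l2 \<le> l3"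
    and m: "m \<in> Midx M1 M2" and nD: "\<not> evD M1 M2 \<alpha> \<beta> l2 l3 m n \<omega>"
  obtains "l2 < Sstat \<alpha> \<beta> m n \<omega>"
    | m' where "m' \<in> matches M1 M2 (card m)" "m' \<noteq> m" "Sstat \<alpha> \<beta> m' n \<omega> \<le> l3"
    | m' where "m' \<in> Midx M1 M2" "card m < card m'" "Sstat \<alpha> \<beta> m' n \<omega> \<le> l2"
proof (cases "evB M1 M2 \<alpha> \<beta> l2 l3 m n \<omega>")
  case False
  then show ?thesis using that unfolding evB_def by (auto simp: not_less)
next
  case True
  with nD obtain m' where m': "m' \<in> Midx M1 M2" "m' \<noteq> m" "evB M1 M2 \<alpha> \<beta> l2 l3 m' n \<omega>"
    unfolding evD_def by blast
  consider "card m < card m'" | "card m' = card m" | "card m' < card m" by linarith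
  then show ?thesis
  proof cases
    case 1
    then show ?thesis using m' that(3) by (auto simp: evB_def)
  next
    case 2
    then have "m \<in> matches M1 M2 (card m')" using m by (simp add: Midx_iff matches_iff)
    then have "l3 < Sstat \<alpha> \<beta> m n \<omega>" using m' by (auto simp: evB_def)
    then show ?thesis using l23 that(1) by simp
  next
    case 3
    then have "l3 < Sstat \<alpha> \<beta> m n \<omega>" by (rule Sstat_gt_if_evB_smaller[OF \<alpha> \<beta> n m m'(1) _ m'(3)])
    then show ?thesis using l23 that(1) by simp
  qed
qed

lemma evD_other_cases:
  fixes \<omega> :: "'a::finite sample"
  assumes \<alpha>: "\<alpha> > 0" and \<beta>: "\<beta> > 0" and n: "n \<ge> 1"
    and m: "m \<in> Midx M1 M2" and m': "m' \<in> Midx M1 M2" "m' \<noteq> m" and D: "evD M1 M2 \<alpha> \<beta> l2 l3 m' n \<omega>"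
  obtains m'' where "m'' \<in> Midx M1 M2" "card m < card m''" "Sstat \<alpha> \<beta> m'' n \<omega> \<le> l2"
    | "l3 < Sstat \<alpha> \<beta> m n \<omega>"
proof -
  have B: "evB M1 M2 \<alpha> \<beta> l2 l3 m' n \<omega>" using D by (simp add: evD_def)
  consider "card m < card m'" | "card m' = card m" | "card m' < card m" by linarith
  then show ?thesis
  proof cases
    case 1
    then show ?thesis using m' B that(1) by (auto simp: evB_def)
  next
    case 2
    then have "m \<in> matches M1 M2 (card m')" using m by (simp add: Midx_iff matches_iff)
    then show ?thesis using m' B that(2) by (auto simp: evB_def)
  next
    case 3
    show ?thesis using Sstat_gt_if_evB_smaller[OF \<alpha> \<beta> n m m'(1) 3 B] that(2) by simp
  qed
qed

lemma expected_tau_le_null: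
  fixes P Q :: "nat \<Rightarrow> 'a::finite pmf"
  assumes \<alpha>: "\<alpha> > 0" and \<beta>: "\<beta> > 0" and M1: "M1 \<ge> 1" and M2: "M2 \<ge> 1"
    and G0: "l1 < G0 M1 M2 \<alpha> \<beta> P Q"
  shows "eventually (\<lambda>N. (\<integral>\<^sup>+ \<omega>. ennreal_of_enat (tau M1 M2 \<alpha> \<beta> l1 l2 l3 N \<omega>) \<partial>obs_space P Q)
    \<le> ennreal (real N)) sequentially"
proof -
  define F where "F = (\<lambda>z. {z}) ` ({..<M1} \<times> {..<M2})"
  have fin: "finite F" by (simp add: F_def)
  have "l1 < GJS (pmf (P i)) (pmf (Q j)) \<alpha> \<beta>" if "i < M1" "j < M2" for i j
    using less_le_trans[OF G0 G0_le[OF that]] .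
  then have gaps: "\<forall>m\<in>F. m \<subseteq> {..<M1} \<times> {..<M2} \<and> l1 < Gm m \<alpha> \<beta> (\<lambda>i. pmf (P i)) (\<lambda>j. pmf (Q j))"
    unfolding F_def Gm_def by auto
  obtain c where c: "c > 0"
    and gap: "Eexp_ge_on M1 M2 \<alpha> \<beta> P Q (ereal c) (\<lambda>\<Omega> \<Psi>. \<exists>m\<in>F. Gm m \<alpha> \<beta> \<Omega> \<Psi> \<le> l1)"
    using uniform_Eexp_gap[OF \<alpha> \<beta> fin gaps] by blast
  show ?thesis
  proof (rule expected_tau_le[OF \<alpha> \<beta> c gap])
    fix n :: nat and \<omega> :: "'a sample"
    assume n: "n \<ge> 1" and "\<not> stops M1 M2 \<alpha> \<beta> l1 l2 l3 n \<omega>"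
    then obtain m where m: "m \<in> Midx M1 M2" "Sstat \<alpha> \<beta> m n \<omega> \<le> l1"
      unfolding stops_def evA_def by (auto simp: not_less)
    then have mm: "is_match M1 M2 m" and "m \<noteq> {}" by (auto simp: Midx_iff)
    then obtain z where z: "z \<in> m" by blast
    then have z_match: "is_match M1 M2 {z}" and "{z} \<in> F"
      using is_match_subset[OF mm] is_matchD(1)[OF mm] by (auto simp: F_def)
    have "Gm {z} \<alpha> \<beta> (typesX M1 (ssize \<alpha> n) \<omega>) (typesY M2 (ssize \<beta> n) \<omega>) \<le> l1"
      using Sstat_mono[OF mm _ \<alpha> \<beta> n, of "{z}" \<omega>] z m(2) unfolding Sstat_eq_Gm_types[OF z_match] by simp
    then show "\<omega> \<in> stage_event M1 M2 \<alpha> \<beta> n (\<lambda>\<Omega> \<Psi>. \<exists>m\<in>F. Gm m \<alpha> \<beta> \<Omega> \<Psi> \<le> l1)"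
      unfolding type_event_def using \<open>{z} \<in> F\<close> by blast
  qed
qed

lemma false_alarm_exponent:
  fixes P Q :: "nat \<Rightarrow> 'a::finite pmf"
  assumes \<alpha>: "\<alpha> > 0" and \<beta>: "\<beta> > 0" and l12: "l2 \<le> l1"
  shows "Er M1 M2 \<alpha> \<beta> l1 P Q \<le>
    liminf (\<lambda>N. neglog (measure (obs_space P Q)
      {\<omega> \<in> space (obs_space P Q). tau M1 M2 \<alpha> \<beta> l1 l2 l3 N \<omega> \<noteq> \<infinity> \<and>
         decision M1 M2 \<alpha> \<beta> l1 l2 l3 N \<omega> \<noteq> None}) / ereal (real N))"
proof (rule error_exponent_ge[OF \<alpha> \<beta> Eexp_ge_on_Er])
  let ?\<Phi> = "\<lambda>\<Omega> \<Psi>. \<exists>m\<in>Midx M1 M2. Gm m \<alpha> \<beta> \<Omega> \<Psi> \<le> l1"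
  show "eventually (\<lambda>N. {\<omega> \<in> space (obs_space P Q). tau M1 M2 \<alpha> \<beta> l1 l2 l3 N \<omega> \<noteq> \<infinity> \<and>
      decision M1 M2 \<alpha> \<beta> l1 l2 l3 N \<omega> \<noteq> None} \<subseteq> (\<Union>n\<in>{N - 1..}. stage_event M1 M2 \<alpha> \<beta> n ?\<Phi>)) sequentially"
  proof (intro always_eventually allI subsetI)
    fix N \<omega> assume "\<omega> \<in> {\<omega> \<in> space (obs_space P Q). tau M1 M2 \<alpha> \<beta> l1 l2 l3 N \<omega> \<noteq> \<infinity> \<and>
      decision M1 M2 \<alpha> \<beta> l1 l2 l3 N \<omega> \<noteq> None}"
    then obtain m where "decision M1 M2 \<alpha> \<beta> l1 l2 l3 N \<omega> = Some m" by auto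
    then obtain n where n: "tau M1 M2 \<alpha> \<beta> l1 l2 l3 N \<omega> = enat n" "m \<in> Midx M1 M2"
      "evD M1 M2 \<alpha> \<beta> l2 l3 m n \<omega>"
      by (rule decision_eq_SomeD)
    have "Sstat \<alpha> \<beta> m n \<omega> \<le> l1"
      using n(3) l12 by (auto simp: evD_def evB_def)
    moreover have "is_match M1 M2 m" using n(2) by (simp add: Midx_iff)
    ultimately have "Gm m \<alpha> \<beta> (typesX M1 (ssize \<alpha> n) \<omega>) (typesY M2 (ssize \<beta> n) \<omega>) \<le> l1"
      by (simp add: Sstat_eq_Gm_types)
    then show "\<omega> \<in> (\<Union>n\<in>{N - 1..}. stage_event M1 M2 \<alpha> \<beta> n ?\<Phi>)"
      using n(2) tau_eq_enatD(1)[OF n(1)] unfolding type_event_def by blast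
  qed
qed

lemma expected_tau_le_match:
  fixes P Q :: "nat \<Rightarrow> 'a::finite pmf"
  assumes \<alpha>: "\<alpha> > 0" and \<beta>: "\<beta> > 0" and l2: "l2 > 0" and l23: "l2 \<le> l3"
    and m: "m \<in> Midx M1 M2" and inP: "inPm M1 M2 m P Q" and Lam: "ereal l3 < Lam M1 M2 \<alpha> \<beta> m P Q"
  shows "eventually (\<lambda>N. (\<integral>\<^sup>+ \<omega>. ennreal_of_enat (tau M1 M2 \<alpha> \<beta> l1 l2 l3 N \<omega>) \<partial>obs_space P Q)
    \<le> ennreal (real N)) sequentially"
proof -
  let ?\<Phi> = "\<lambda>\<Omega> \<Psi>. l2 < Gm m \<alpha> \<beta> \<Omega> \<Psi> \<or>
    (\<exists>m'\<in>matches M1 M2 (card m). m' \<noteq> m \<and> Gm m' \<alpha> \<beta> \<Omega> \<Psi> \<le> l3) \<or>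
    (\<exists>m'\<in>Midx M1 M2. card m < card m' \<and> Gm m' \<alpha> \<beta> \<Omega> \<Psi> \<le> l2)"
  obtain c where c: "c > 0" and gap: "Eexp_ge_on M1 M2 \<alpha> \<beta> P Q (ereal c) ?\<Phi>"
    using Eexp_gap_match_continue[OF \<alpha> \<beta> l2 l23 m inP Lam] by blast
  have mm: "is_match M1 M2 m" using m by (simp add: Midx_iff)
  show ?thesis
  proof (rule expected_tau_le[OF \<alpha> \<beta> c gap])
    fix n :: nat and \<omega> :: "'a sample"
    assume n: "n \<ge> 1" and "\<not> stops M1 M2 \<alpha> \<beta> l1 l2 l3 n \<omega>"
    then have "\<not> evD M1 M2 \<alpha> \<beta> l2 l3 m n \<omega>" using m by (auto simp: stops_def)
    then have "?\<Phi> (typesX M1 (ssize \<alpha> n) \<omega>) (typesY M2 (ssize \<beta> n) \<omega>)"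
    proof (rule not_evD_cases[OF \<alpha> \<beta> n l23 m])
      assume "l2 < Sstat \<alpha> \<beta> m n \<omega>"
      then show ?thesis by (simp add: Sstat_eq_Gm_types[OF mm])
    next
      fix m' assume m': "m' \<in> matches M1 M2 (card m)" "m' \<noteq> m" "Sstat \<alpha> \<beta> m' n \<omega> \<le> l3"
      then have "is_match M1 M2 m'" by (simp add: matches_iff)
      with m' show ?thesis by (auto simp: Sstat_eq_Gm_types)
    next
      fix m' assume m': "m' \<in> Midx M1 M2" "card m < card m'" "Sstat \<alpha> \<beta> m' n \<omega> \<le> l2"
      then have "is_match M1 M2 m'" by (simp add: Midx_iff)
      with m' show ?thesis by (auto simp: Sstat_eq_Gm_types)
    qed
    then show "\<omega> \<in> stage_event M1 M2 \<alpha> \<beta> n ?\<Phi>"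
      unfolding type_event_def by simp
  qed
qed

lemma mismatch_exponent:
  fixes P Q :: "nat \<Rightarrow> 'a::finite pmf"
  assumes \<alpha>: "\<alpha> > 0" and \<beta>: "\<beta> > 0" and m: "m \<in> Midx M1 M2" and inP: "inPm M1 M2 m P Q"
  shows "min (Gexp M1 M2 \<alpha> \<beta> (card m) l2 P Q) (ereal l3) \<le>
    liminf (\<lambda>N. neglog (measure (obs_space P Q)
      {\<omega> \<in> space (obs_space P Q). tau M1 M2 \<alpha> \<beta> l1 l2 l3 N \<omega> \<noteq> \<infinity> \<and>
         decision M1 M2 \<alpha> \<beta> l1 l2 l3 N \<omega> \<notin> {Some m, None}}) / ereal (real N))"
proof -
  have mm: "is_match M1 M2 m" using m by (simp add: Midx_iff)
  have true: "\<forall>(i, j)\<in>m. P i = Q j" by (rule inPm_true[OF inP mm])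
  let ?\<Phi> = "\<lambda>\<Omega> \<Psi>. (\<exists>m'\<in>Midx M1 M2. card m < card m' \<and> Gm m' \<alpha> \<beta> \<Omega> \<Psi> \<le> l2) \<or> l3 < Gm m \<alpha> \<beta> \<Omega> \<Psi>"
  show ?thesis
  proof (rule error_exponent_ge[OF \<alpha> \<beta> Eexp_ge_on_disj[OF Eexp_ge_on_Gexp Eexp_ge_on_Gm_true[OF mm true \<alpha> \<beta>]]])
    show "eventually (\<lambda>N. {\<omega> \<in> space (obs_space P Q). tau M1 M2 \<alpha> \<beta> l1 l2 l3 N \<omega> \<noteq> \<infinity> \<and>
        decision M1 M2 \<alpha> \<beta> l1 l2 l3 N \<omega> \<notin> {Some m, None}} \<subseteq> (\<Union>n\<in>{N - 1..}. stage_event M1 M2 \<alpha> \<beta> n ?\<Phi>))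
        sequentially"
      using eventually_ge_at_top[of 2]
    proof (eventually_elim, intro subsetI)
      case (elim N)
      fix \<omega> assume "\<omega> \<in> {\<omega> \<in> space (obs_space P Q). tau M1 M2 \<alpha> \<beta> l1 l2 l3 N \<omega> \<noteq> \<infinity> \<and>
        decision M1 M2 \<alpha> \<beta> l1 l2 l3 N \<omega> \<notin> {Some m, None}}"
      then obtain m' where dec: "decision M1 M2 \<alpha> \<beta> l1 l2 l3 N \<omega> = Some m'" and "m' \<noteq> m" by auto
      from dec obtain n where n: "tau M1 M2 \<alpha> \<beta> l1 l2 l3 N \<omega> = enat n" "m' \<in> Midx M1 M2"
        "evD M1 M2 \<alpha> \<beta> l2 l3 m' n \<omega>"
        by (rule decision_eq_SomeD)
      have "N - 1 \<le> n" by (rule tau_eq_enatD(1)[OF n(1)])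
      with elim have "n \<ge> 1" by simp
      have "?\<Phi> (typesX M1 (ssize \<alpha> n) \<omega>) (typesY M2 (ssize \<beta> n) \<omega>)"
      proof (rule evD_other_cases[OF \<alpha> \<beta> \<open>n \<ge> 1\<close> m n(2) \<open>m' \<noteq> m\<close> n(3)])
        fix m'' assume m'': "m'' \<in> Midx M1 M2" "card m < card m''" "Sstat \<alpha> \<beta> m'' n \<omega> \<le> l2"
        then have "is_match M1 M2 m''" by (simp add: Midx_iff)
        with m'' show ?thesis by (auto simp: Sstat_eq_Gm_types)
      next
        assume "l3 < Sstat \<alpha> \<beta> m n \<omega>"
        then show ?thesis by (simp add: Sstat_eq_Gm_types[OF mm])
      qed
      then show "\<omega> \<in> (\<Union>n\<in>{N - 1..}. stage_event M1 M2 \<alpha> \<beta> n ?\<Phi>)"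
        using \<open>N - 1 \<le> n\<close> unfolding type_event_def by blast
    qed
  qed
qed

lemma false_reject_exponent:
  fixes P Q :: "nat \<Rightarrow> 'a::finite pmf"
  assumes \<alpha>: "\<alpha> > 0" and \<beta>: "\<beta> > 0" and m: "m \<in> Midx M1 M2" and inP: "inPm M1 M2 m P Q"
  shows "ereal l1 \<le>
    liminf (\<lambda>N. neglog (measure (obs_space P Q)
      {\<omega> \<in> space (obs_space P Q). tau M1 M2 \<alpha> \<beta> l1 l2 l3 N \<omega> \<noteq> \<infinity> \<and>
         decision M1 M2 \<alpha> \<beta> l1 l2 l3 N \<omega> = None}) / ereal (real N))"
proof -
  have mm: "is_match M1 M2 m" using m by (simp add: Midx_iff)
  have true: "\<forall>(i, j)\<in>m. P i = Q j" by (rule inPm_true[OF inP mm])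
  let ?\<Phi> = "\<lambda>\<Omega> \<Psi>. l1 < Gm m \<alpha> \<beta> \<Omega> \<Psi>"
  show ?thesis
  proof (rule error_exponent_ge[OF \<alpha> \<beta> Eexp_ge_on_Gm_true[OF mm true \<alpha> \<beta>]])
    show "eventually (\<lambda>N. {\<omega> \<in> space (obs_space P Q). tau M1 M2 \<alpha> \<beta> l1 l2 l3 N \<omega> \<noteq> \<infinity> \<and>
        decision M1 M2 \<alpha> \<beta> l1 l2 l3 N \<omega> = None} \<subseteq> (\<Union>n\<in>{N - 1..}. stage_event M1 M2 \<alpha> \<beta> n ?\<Phi>)) sequentially"
    proof (intro always_eventually allI subsetI)
      fix N \<omega> assume \<omega>: "\<omega> \<in> {\<omega> \<in> space (obs_space P Q). tau M1 M2 \<alpha> \<beta> l1 l2 l3 N \<omega> \<noteq> \<infinity> \<and>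
        decision M1 M2 \<alpha> \<beta> l1 l2 l3 N \<omega> = None}"
      then obtain n where n: "tau M1 M2 \<alpha> \<beta> l1 l2 l3 N \<omega> = enat n" by auto
      with \<omega> have "evA M1 M2 \<alpha> \<beta> l1 n \<omega>" by (intro decision_eq_NoneD) auto
      then have "l1 < Sstat \<alpha> \<beta> m n \<omega>"
        using m unfolding evA_def by blast
      then have "?\<Phi> (typesX M1 (ssize \<alpha> n) \<omega>) (typesY M2 (ssize \<beta> n) \<omega>)"
        unfolding Sstat_eq_Gm_types[OF mm] .
      then show "\<omega> \<in> (\<Union>n\<in>{N - 1..}. stage_event M1 M2 \<alpha> \<beta> n ?\<Phi>)"
        using tau_eq_enatD(1)[OF n] unfolding type_event_def by blast
    qed
  qed
qed

theorem theorem3: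
  fixes M1 M2 :: nat and \<alpha> \<beta> l1 l2 l3 :: real
  assumes "M1 \<ge> M2" and "M2 \<ge> 1" and "\<alpha> > 0" and "\<beta> > 0"
    and "l1 > 0" and "l2 > 0" and "l3 > 0" and "l2 \<le> min l1 l3"
  shows
  "(\<forall>(P :: nat \<Rightarrow> 'a::finite pmf) Q. inP0 M1 M2 P Q \<longrightarrow> l1 < G0 M1 M2 \<alpha> \<beta> P Q \<longrightarrow>
      (eventually (\<lambda>N. (\<integral>\<^sup>+ \<omega>. ennreal_of_enat (tau M1 M2 \<alpha> \<beta> l1 l2 l3 N \<omega>) \<partial>obs_space P Q)
                         \<le> ennreal (real N)) sequentially \<and>
       Er M1 M2 \<alpha> \<beta> l1 P Q \<le>
         liminf (\<lambda>N. neglog (measure (obs_space P Q)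
            {\<omega> \<in> space (obs_space P Q). tau M1 M2 \<alpha> \<beta> l1 l2 l3 N \<omega> \<noteq> \<infinity> \<and>
                 decision M1 M2 \<alpha> \<beta> l1 l2 l3 N \<omega> \<noteq> None}) / ereal (real N))))
   \<and>
   (\<forall>m \<in> Midx M1 M2. \<forall>(P :: nat \<Rightarrow> 'a::finite pmf) Q. inPm M1 M2 m P Q \<longrightarrow>
      ereal l3 < Lam M1 M2 \<alpha> \<beta> m P Q \<longrightarrow>
      (eventually (\<lambda>N. (\<integral>\<^sup>+ \<omega>. ennreal_of_enat (tau M1 M2 \<alpha> \<beta> l1 l2 l3 N \<omega>) \<partial>obs_space P Q)
                         \<le> ennreal (real N)) sequentially \<and>
       min (Gexp M1 M2 \<alpha> \<beta> (card m) l2 P Q) (ereal l3) \<le>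
         liminf (\<lambda>N. neglog (measure (obs_space P Q)
            {\<omega> \<in> space (obs_space P Q). tau M1 M2 \<alpha> \<beta> l1 l2 l3 N \<omega> \<noteq> \<infinity> \<and>
                 decision M1 M2 \<alpha> \<beta> l1 l2 l3 N \<omega> \<notin> {Some m, None}}) / ereal (real N)) \<and>
       ereal l1 \<le>
         liminf (\<lambda>N. neglog (measure (obs_space P Q)
            {\<omega> \<in> space (obs_space P Q). tau M1 M2 \<alpha> \<beta> l1 l2 l3 N \<omega> \<noteq> \<infinity> \<and>
                 decision M1 M2 \<alpha> \<beta> l1 l2 l3 N \<omega> = None}) / ereal (real N))))"
proof -
  have \<alpha>: "\<alpha> > 0" and \<beta>: "\<beta> > 0" and l2: "l2 > 0" using assms by simp_all
  have M1: "M1 \<ge> 1" and M2: "M2 \<ge> 1" using assms(1,2) by simp_all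
  have l12: "l2 \<le> l1" and l23: "l2 \<le> l3" using assms(8) by simp_all
  show ?thesis
    by (intro conjI allI impI ballI expected_tau_le_null[OF \<alpha> \<beta> M1 M2] false_alarm_exponent[OF \<alpha> \<beta> l12]
        expected_tau_le_match[OF \<alpha> \<beta> l2 l23] mismatch_exponent[OF \<alpha> \<beta>] false_reject_exponent[OF \<alpha> \<beta>])
qed

end
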